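(* Let $p>1$ and $1/p+1/q=1$. Let $\lambda>0$ and let $r,s$ be real numbers with $r+s=\lambda$. Let $k_\lambda:(0,\infty)\times(0,\infty)\to(0,\infty)$ be a measurable function homogeneous of degree $-\lambda$ (i.e. $k_\lambda(ux,uy)=u^{-\lambda}k_\lambda(x,y)$ for all $u,x,y>0$), and assume that $$k_\lambda(r):=\int_0^\infty k_\lambda(u,1)\,u^{r-1}\,du$$ is a (finite) positive number. Assume that the functions $u\mapsto k_\lambda(u,1)u^{r-1}$ and $u\mapsto k_\lambda(1,u)u^{s-1}$ are decreasing on $(0,\infty)$ and strictly decreasing on some subinterval of $(0,\infty)$. Let $a_n,b_n\ge 0$ ($n\ge1$) with $0<\sum_{n=1}^\infty a_n^p<\infty$ and $0<\sum_{n=1}^\infty b_n^q<\infty$, and let $A_n=\sum_{k=1}^n a_k$, $B_n=\sum_{k=1}^n b_k$. Then $$\sum_{n=1}^\infty\sum_{m=1}^\infty m^{r-\frac1q-1}n^{s-\frac1p-1}k_\lambda(m,n)A_mB_n< pq\,k_\lambda(r)\Big[\sum_{n=1}^\infty a_n^p\Big]^{1/p}\Big[\sum_{n=1}^\infty b_n^q\Big]^{1/q}$$ and $$\sum_{n=1}^\infty\Big[\sum_{m=1}^\infty m^{r-\frac1q-1}n^{s-\frac1p}k_\lambda(m,n)A_m\Big]^p<[q\,k_\lambda(r)]^p\sum_{n=1}^\infty a_n^p,$$ and the constant factors $pq\,k_\lambda(r)$ and $[q\,k_\lambda(r)]^p$ are the best possible.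
   Context: A measurable function $k_\lambda(x,y)$ on $(0,\infty)^2$ with $k_\lambda(ux,uy)=u^{-\lambda}k_\lambda(x,y)$ for all $u,x,y>0$ is called homogeneous of degree $-\lambda$. "Best possible" means that the inequality fails (for some admissible sequences) if the constant is replaced by any smaller positive constant. *)

theory Defs
  imports "HOL-Analysis.Analysis"
begin

definition kint :: "(real \<Rightarrow> real \<Rightarrow> real) \<Rightarrow> real \<Rightarrow> real" where
  "kint k r = (LINT u:{0<..}|lborel. k u 1 * u powr (r - 1))"

definition psum :: "(nat \<Rightarrow> real) \<Rightarrow> nat \<Rightarrow> real" where
  "psum a n = (\<Sum>k=1..n. a k)"

definition decr_strict_somewhere :: "(real \<Rightarrow> real) \<Rightarrow> bool" where
  "decr_strict_somewhere f \<longleftrightarrow>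
     (\<forall>x y. 0 < x \<and> x \<le> y \<longrightarrow> f y \<le> f x) \<and>
     (\<exists>c d. 0 < c \<and> c < d \<and> (\<forall>x y. c \<le> x \<and> x < y \<and> y \<le> d \<longrightarrow> f y < f x))"

definition admissible :: "real \<Rightarrow> (nat \<Rightarrow> real) \<Rightarrow> bool" where
  "admissible p a \<longleftrightarrow> (\<forall>n\<ge>1. a n \<ge> 0) \<and>
     (\<lambda>n. a n powr p) summable_on {1..} \<and> infsum (\<lambda>n. a n powr p) {1..} > 0"

definition ineq1 :: "(real \<Rightarrow> real \<Rightarrow> real) \<Rightarrow> real \<Rightarrow> real \<Rightarrow> real \<Rightarrow> real \<Rightarrow> real
    \<Rightarrow> (nat \<Rightarrow> real) \<Rightarrow> (nat \<Rightarrow> real) \<Rightarrow> bool" where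
  "ineq1 k p q r s C a b \<longleftrightarrow>
     (let t = (\<lambda>(m,n). real m powr (r - 1/q - 1) * real n powr (s - 1/p - 1)
                        * k (real m) (real n) * psum a m * psum b n)
      in t summable_on ({1..} \<times> {1..}) \<and>
         infsum t ({1..} \<times> {1..}) <
           C * (infsum (\<lambda>n. a n powr p) {1..}) powr (1/p)
             * (infsum (\<lambda>n. b n powr q) {1..}) powr (1/q))"

definition ineq2 :: "(real \<Rightarrow> real \<Rightarrow> real) \<Rightarrow> real \<Rightarrow> real \<Rightarrow> real \<Rightarrow> real \<Rightarrow> real
    \<Rightarrow> (nat \<Rightarrow> real) \<Rightarrow> bool" where
  "ineq2 k p q r s C a \<longleftrightarrow>
     (let t = (\<lambda>n m. real m powr (r - 1/q - 1) * real n powr (s - 1/p)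
                      * k (real m) (real n) * psum a m)
      in (\<forall>n\<ge>1. t n summable_on {1..}) \<and>
         (\<lambda>n. (infsum (t n) {1..}) powr p) summable_on {1..} \<and>
         infsum (\<lambda>n. (infsum (t n) {1..}) powr p) {1..} <
           C * infsum (\<lambda>n. a n powr p) {1..})"

end

theory Submission
  imports Defs
begin

text \<open>
  Put \<open>A\<^sub>m = m \<alpha>\<^sub>m\<close>, so that \<open>\<alpha>\<^sub>m\<close> is the running average of \<open>a\<close>. For fixed \<open>n\<close>,
  Hoelder's inequality against the weights \<open>k(m,n) m^(r-1)\<close> bounds the inner series of the second
  inequality; these weights decrease in \<open>m\<close>, so their sum is at most \<open>n^(-s) k(r)\<close> by comparison
  with the integral defining \<open>k(r)\<close>, and symmetrically in \<open>n\<close>. Summing over \<open>n\<close> and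
  interchanging the sums bounds the left-hand side by \<open>k(r)^p \<Sum> \<alpha>\<^sub>m^p\<close>, and the strict discrete
  Hardy inequality \<open>\<Sum> \<alpha>\<^sub>m^p < q^p \<Sum> a\<^sub>m^p\<close> gives the second inequality. The first one
  follows from it by Hoelder's inequality in \<open>n\<close> and Hardy's inequality for \<open>b\<close>.
  For optimality, the test sequences \<open>a\<^sub>n = n^(-(1+\<epsilon>)/p)\<close> and \<open>b\<^sub>n = n^(-(1+\<epsilon>)/q)\<close>
  make both sides of order \<open>1/\<epsilon>\<close>, with ratio tending to \<open>p q k(r)\<close> as \<open>\<epsilon> \<rightarrow> 0\<close>.
\<close>

lemma conjugate_exponent:
  fixes p q :: real
  assumes p: "p > 1" and pq: "1/p + 1/q = 1"
  shows "q > 1" "q = p/(p-1)" "p/q = p - 1"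
proof -
  have iq: "1/q = (p-1)/p" using pq p by (simp add: field_simps)
  have "q = 1 / (1/q)" by simp
  also have "\<dots> = p/(p-1)" using iq by simp
  finally show q: "q = p/(p-1)" .
  show "q > 1" using p unfolding q by (simp add: field_simps)
  show "p/q = p - 1" using p unfolding q by (simp add: field_simps)
qed

lemma powr_add_eq: "a + b = c \<Longrightarrow> (x::real) powr a * x powr b = x powr c"
  by (simp add: powr_add[symmetric])

lemma le_powr_if_root_le:
  fixes x B P :: real
  assumes "0 \<le> x" "0 < P" "x powr (1/P) \<le> B"
  shows "x \<le> B powr P"
proof -
  have "(x powr (1/P)) powr P \<le> B powr P" using assms by (intro powr_mono2) auto
  then show ?thesis using assms by (simp add: powr_powr)
qed

lemma nonneg_summable_on_atLeast1_if_partial_sums_bounded: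
  fixes f :: "nat \<Rightarrow> real"
  assumes nonneg: "\<And>n. n \<ge> 1 \<Longrightarrow> f n \<ge> 0" and bound: "\<And>N. (\<Sum>n=1..N. f n) \<le> B"
  shows "f summable_on {1..}" "infsum f {1..} \<le> B"
proof -
  have finite_sums: "sum f F \<le> B" if "finite F" "F \<subseteq> {1..}" for F
  proof (cases "F = {}")
    case True then show ?thesis using bound[of 0] by simp
  next
    case False
    then have "sum f F \<le> sum f {1..Max F}"
      using that by (intro sum_mono2) (use nonneg in auto)
    also have "\<dots> \<le> B" by (rule bound)
    finally show ?thesis .
  qed
  show summable: "f summable_on {1..}"
    by (rule nonneg_bdd_above_summable_on) (use nonneg finite_sums in \<open>auto intro!: bdd_aboveI2\<close>)
  show "infsum f {1..} \<le> B"
    by (rule infsum_le_finite_sums[OF summable]) (use finite_sums in auto)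
qed

lemma partial_sum_le_infsum_atLeast1:
  fixes f :: "nat \<Rightarrow> real"
  assumes "f summable_on {1..}" "\<And>n. n \<ge> 1 \<Longrightarrow> f n \<ge> 0" "M \<ge> 1"
  shows "(\<Sum>n=M..N. f n) \<le> infsum f {1..}"
  by (rule finite_sum_le_infsum) (use assms in auto)

lemma constant_summable_on_atLeast1_eq_0:
  fixes c :: real
  assumes "(\<lambda>n::nat. c) summable_on {1..}" "c \<ge> 0"
  shows "c = 0"
proof (rule ccontr)
  assume "c \<noteq> 0"
  with assms have c: "c > 0" by simp
  obtain N :: nat where N: "real N > infsum (\<lambda>n::nat. c) {1..} / c"
    using reals_Archimedean2 by blast
  have "real N * c \<le> infsum (\<lambda>n::nat. c) {1..}"
    using partial_sum_le_infsum_atLeast1[OF assms(1), of 1 N] c by simp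
  then show False using N c by (simp add: field_simps)
qed

lemma nonneg_double_infsum_swap:
  fixes f :: "'a \<Rightarrow> 'b \<Rightarrow> real"
  assumes nonneg: "\<And>x y. x \<in> A \<Longrightarrow> y \<in> B \<Longrightarrow> f x y \<ge> 0"
    and inner: "\<And>x. x \<in> A \<Longrightarrow> f x summable_on B"
    and outer: "(\<lambda>x. infsum (f x) B) summable_on A"
  shows "(\<lambda>(y,x). f x y) summable_on B \<times> A"
    and "infsum (\<lambda>(y,x). f x y) (B \<times> A) = infsum (\<lambda>x. infsum (f x) B) A"
    and "\<And>y. y \<in> B \<Longrightarrow> (\<lambda>x. f x y) summable_on A"
    and "(\<lambda>y. infsum (\<lambda>x. f x y) A) summable_on B"
    and "infsum (\<lambda>y. infsum (\<lambda>x. f x y) A) B = infsum (\<lambda>x. infsum (f x) B) A"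
proof -
  have "(\<lambda>z. f (fst z) (snd z)) summable_on A \<times> B"
    by (rule summable_on_SigmaI[where g="\<lambda>x. infsum (f x) B"]) (use nonneg inner outer in auto)
  then have AB: "(\<lambda>(x,y). f x y) summable_on A \<times> B" by (simp add: case_prod_beta')
  then have "((\<lambda>(x,y). f x y) has_sum infsum (\<lambda>x. infsum (f x) B) A) (A \<times> B)"
    using infsum_Sigma'_banach[OF AB] by simp
  then have BA: "((\<lambda>(y,x). f x y) has_sum infsum (\<lambda>x. infsum (f x) B) A) (B \<times> A)"
    using has_sum_swap[of "\<lambda>(x,y). f x y"] by (simp add: case_prod_beta')
  show "(\<lambda>(y,x). f x y) summable_on B \<times> A" using BA by (rule has_sum_imp_summable)
  then show "\<And>y. y \<in> B \<Longrightarrow> (\<lambda>x. f x y) summable_on A"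
    and "(\<lambda>y. infsum (\<lambda>x. f x y) A) summable_on B"
    using summable_on_SigmaD1[of "\<lambda>y x. f x y" B "\<lambda>_. A"]
      summable_on_Sigma_banach[of "\<lambda>y x. f x y" B "\<lambda>_. A"] by auto
  show "infsum (\<lambda>(y,x). f x y) (B \<times> A) = infsum (\<lambda>x. infsum (f x) B) A"
    using BA by (rule infsumI)
  show "infsum (\<lambda>y. infsum (\<lambda>x. f x y) A) B = infsum (\<lambda>x. infsum (f x) B) A"
    using infsum_swap_banach[of f A B] AB by simp
qed

subsection \<open>Young and Hoelder inequalities\<close>

lemma ln_less_minus_one:
  fixes x :: real
  assumes "x > 0" "x \<noteq> 1"
  shows "ln x < x - 1"
proof -
  have s: "sqrt x > 0" "sqrt x \<noteq> 1" using assms by auto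
  have "ln x = 2 * ln (sqrt x)" using assms by (simp add: ln_sqrt)
  also have "\<dots> \<le> 2 * (sqrt x - 1)" using ln_le_minus_one[OF s(1)] by simp
  also have "\<dots> < x - 1"
  proof -
    have "(sqrt x - 1)^2 > 0" using s by simp
    then show ?thesis using assms by (simp add: power2_eq_square algebra_simps)
  qed
  finally show ?thesis .
qed

lemma weighted_AM_GM_strict:
  fixes a b w :: real
  assumes "a > 0" "b > 0" "a \<noteq> b" "0 < w" "w < 1"
  shows "a powr w * b powr (1 - w) < w * a + (1 - w) * b"
proof -
  define M where "M = w * a + (1 - w) * b"
  have M: "M > 0" unfolding M_def using assms by (intro add_pos_pos) auto
  have aM: "a \<noteq> M"
  proof
    assume "a = M"
    then have "(1 - w) * (a - b) = 0" unfolding M_def by (simp add: algebra_simps)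
    then show False using assms by simp
  qed
  have bM: "b \<noteq> M"
  proof
    assume "b = M"
    then have "w * (a - b) = 0" unfolding M_def by (auto simp: algebra_simps)
    then show False using assms by simp
  qed
  have "ln (a/M) < a/M - 1" "ln (b/M) < b/M - 1"
    using aM bM M assms by (auto intro!: ln_less_minus_one)
  then have "w * ln (a/M) + (1 - w) * ln (b/M) < w * (a/M - 1) + (1 - w) * (b/M - 1)"
    using assms by (intro add_strict_mono mult_strict_left_mono) auto
  also have "\<dots> = 0" using M unfolding M_def by (simp add: field_simps)
  finally have "w * ln a + (1 - w) * ln b < ln M"
    using assms M by (simp add: ln_div algebra_simps)
  then have "exp (w * ln a + (1 - w) * ln b) < M" using M by (metis exp_less_cancel_iff exp_ln)
  then show ?thesis using assms unfolding M_def by (simp add: powr_def exp_add)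
qed

definition young_defect :: "real \<Rightarrow> real \<Rightarrow> real \<Rightarrow> real" where
  "young_defect P x y = ((P - 1) * x powr P + y powr P) / P - x powr (P - 1) * y"

lemma young_defect_pos:
  fixes x y P :: real
  assumes P: "P > 1" and xy: "x \<ge> 0" "y \<ge> 0" "x \<noteq> y"
  shows "young_defect P x y > 0"
proof (cases "x = 0 \<or> y = 0")
  case True
  then show ?thesis using P xy by (auto simp: young_defect_def)
next
  case False
  then have pos: "x > 0" "y > 0" using xy by auto
  have "x powr P \<noteq> y powr P"
  proof
    assume "x powr P = y powr P"
    then have "(x powr P) powr (1/P) = (y powr P) powr (1/P)" by simp
    then show False using pos P xy(3) by (simp add: powr_powr)
  qed
  then have "(x powr P) powr ((P-1)/P) * (y powr P) powr (1 - (P-1)/P)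
      < (P-1)/P * x powr P + (1 - (P-1)/P) * y powr P"
    using P pos by (intro weighted_AM_GM_strict) auto
  moreover have "(x powr P) powr ((P-1)/P) = x powr (P - 1)" using P by (simp add: powr_powr)
  moreover have "(y powr P) powr (1 - (P-1)/P) = y" using P pos by (simp add: powr_powr field_simps)
  moreover have "(P-1)/P * x powr P + (1 - (P-1)/P) * y powr P = ((P - 1) * x powr P + y powr P) / P"
    using P by (simp add: field_simps)
  ultimately show ?thesis unfolding young_defect_def by simp
qed

lemma young_defect_nonneg:
  fixes x y P :: real
  assumes P: "P > 1" and xy: "x \<ge> 0" "y \<ge> 0"
  shows "young_defect P x y \<ge> 0"
proof (cases "x = y")
  case True
  have "y * y powr (P - 1) = y powr P" using powr_mult_base[OF xy(2), of "P - 1"] by simp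
  then show ?thesis using True P by (simp add: young_defect_def field_simps)
qed (use young_defect_pos[OF P xy] in auto)

lemma Hoelder_inequality_sum:
  fixes x y :: "'a \<Rightarrow> real"
  assumes p: "p > 1" and pq: "1/p + 1/q = 1" and F: "finite F"
    and x: "\<And>i. i \<in> F \<Longrightarrow> x i \<ge> 0" and y: "\<And>i. i \<in> F \<Longrightarrow> y i \<ge> 0"
  shows "(\<Sum>i\<in>F. x i * y i) \<le> (\<Sum>i\<in>F. x i powr p) powr (1/p) * (\<Sum>i\<in>F. y i powr q) powr (1/q)"
proof -
  have q: "q > 1" using conjugate_exponent[OF p pq] by simp
  define X where "X = (\<Sum>i\<in>F. x i powr p)"
  define Y where "Y = (\<Sum>i\<in>F. y i powr q)"
  have X0: "X \<ge> 0" "Y \<ge> 0" unfolding X_def Y_def by (auto intro: sum_nonneg)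
  show ?thesis
  proof (cases "X = 0 \<or> Y = 0")
    case True
    then have "\<forall>i\<in>F. x i = 0 \<or> y i = 0"
      using F x y unfolding X_def Y_def by (subst (asm) sum_nonneg_eq_0_iff; auto)+
    then have "(\<Sum>i\<in>F. x i * y i) = 0" by (intro sum.neutral) auto
    then show ?thesis using X0 unfolding X_def Y_def by simp
  next
    case False
    then have Xp: "X > 0" "Y > 0" using X0 by auto
    define u where "u i = x i / X powr (1/p)" for i
    define v where "v i = y i / Y powr (1/q)" for i
    have up: "u i powr p = x i powr p / X" if "i \<in> F" for i
      using that x Xp p by (simp add: u_def powr_divide powr_powr)
    have vq: "v i powr q = y i powr q / Y" if "i \<in> F" for i
      using that y Xp q by (simp add: v_def powr_divide powr_powr)
    have "(\<Sum>i\<in>F. u i * v i) \<le> (\<Sum>i\<in>F. u i powr p / p + v i powr q / q)"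
      by (rule sum_mono, rule Youngs_inequality[OF p q pq]) (use x y Xp in \<open>auto simp: u_def v_def\<close>)
    also have "\<dots> = (\<Sum>i\<in>F. x i powr p) / X / p + (\<Sum>i\<in>F. y i powr q) / Y / q"
      by (simp add: sum.distrib up vq sum_divide_distrib)
    also have "\<dots> = 1" using Xp pq unfolding X_def Y_def by simp
    finally have "(\<Sum>i\<in>F. u i * v i) \<le> 1" .
    moreover have "(\<Sum>i\<in>F. u i * v i) = (\<Sum>i\<in>F. x i * y i) / (X powr (1/p) * Y powr (1/q))"
      by (simp add: u_def v_def sum_divide_distrib)
    ultimately show ?thesis using Xp unfolding X_def[symmetric] Y_def[symmetric]
      by (simp add: divide_le_eq)
  qed
qed

lemma Hoelder_inequality_infsum:
  fixes x y :: "'a \<Rightarrow> real"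
  assumes p: "p > 1" and pq: "1/p + 1/q = 1"
    and x: "\<And>i. i \<in> A \<Longrightarrow> x i \<ge> 0" and y: "\<And>i. i \<in> A \<Longrightarrow> y i \<ge> 0"
    and sx: "(\<lambda>i. x i powr p) summable_on A" and sy: "(\<lambda>i. y i powr q) summable_on A"
  shows "(\<lambda>i. x i * y i) summable_on A"
    "infsum (\<lambda>i. x i * y i) A
       \<le> (infsum (\<lambda>i. x i powr p) A) powr (1/p) * (infsum (\<lambda>i. y i powr q) A) powr (1/q)"
proof -
  have finite_sums: "(\<Sum>i\<in>F. x i * y i)
      \<le> (infsum (\<lambda>i. x i powr p) A) powr (1/p) * (infsum (\<lambda>i. y i powr q) A) powr (1/q)"
    if F: "finite F" "F \<subseteq> A" for F
  proof -
    have "(\<Sum>i\<in>F. x i * y i) \<le> (\<Sum>i\<in>F. x i powr p) powr (1/p) * (\<Sum>i\<in>F. y i powr q) powr (1/q)"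
      by (rule Hoelder_inequality_sum[OF p pq F(1)]) (use F x y in auto)
    also have "\<dots> \<le> (infsum (\<lambda>i. x i powr p) A) powr (1/p) * (infsum (\<lambda>i. y i powr q) A) powr (1/q)"
    proof (intro mult_mono powr_mono2)
      show "(\<Sum>i\<in>F. x i powr p) \<le> infsum (\<lambda>i. x i powr p) A"
        by (rule finite_sum_le_infsum[OF sx F]) auto
      show "(\<Sum>i\<in>F. y i powr q) \<le> infsum (\<lambda>i. y i powr q) A"
        by (rule finite_sum_le_infsum[OF sy F]) auto
    qed (use p conjugate_exponent[OF p pq] in \<open>auto intro: sum_nonneg\<close>)
    finally show ?thesis .
  qed
  show summable: "(\<lambda>i. x i * y i) summable_on A"
    by (rule nonneg_bdd_above_summable_on) (use x y finite_sums in \<open>auto intro!: bdd_aboveI2\<close>)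
  show "infsum (\<lambda>i. x i * y i) A
       \<le> (infsum (\<lambda>i. x i powr p) A) powr (1/p) * (infsum (\<lambda>i. y i powr q) A) powr (1/q)"
    by (rule infsum_le_finite_sums[OF summable]) (use finite_sums in auto)
qed

lemma powr_le_of_Hoelder_bound:
  fixes J A B c p q :: real
  assumes p: "p > 1" and pq: "1/p + 1/q = 1"
    and J: "J \<le> A powr (1/p) * B powr (1/q)" "0 \<le> J" and A: "0 \<le> A" and B: "0 \<le> B" "B \<le> c"
  shows "J powr p \<le> A * c powr (p - 1)"
proof -
  have "J powr p \<le> (A powr (1/p) * B powr (1/q)) powr p" using J p by (intro powr_mono2) auto
  also have "\<dots> = A * B powr (p - 1)"
    using A B p conjugate_exponent(3)[OF p pq] by (simp add: powr_mult powr_powr)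
  also have "\<dots> \<le> A * c powr (p - 1)" using A B p by (intro mult_left_mono powr_mono2) auto
  finally show ?thesis .
qed

lemma Hoelder_split_factorization:
  fixes m y c x p q r s :: real
  assumes m: "m > 0" and y: "y > 0" and c: "c > 0" and x: "x \<ge> 0"
    and p: "p > 1" and pq: "1/p + 1/q = 1"
  shows "m powr (r - 1/q - 1) * y powr (s - 1/p) * c * (m * x)
       = (y powr (p * s - s) * (y powr (s - 1) * c * m powr r * x powr p)) powr (1/p)
         * (c * m powr (r - 1)) powr (1/q)"
proof (cases "x = 0")
  case True then show ?thesis using p by simp
next
  case False
  with x have x: "x > 0" by simp
  have iq: "1/q = 1 - 1/p" using pq by simp
  have "(r - 1/q - 1) * A + (s - 1/p) * B + C + A + D
      = (1/p) * ((p * s - s) * B + ((s - 1) * B + C + r * A + p * D)) + (1/q) * (C + (r - 1) * A)"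
    for A B C D using p unfolding iq by (simp add: field_simps)
  from this[of "ln m" "ln y" "ln c" "ln x"]
  have "ln (m powr (r - 1/q - 1) * y powr (s - 1/p) * c * (m * x))
      = ln ((y powr (p * s - s) * (y powr (s - 1) * c * m powr r * x powr p)) powr (1/p)
            * (c * m powr (r - 1)) powr (1/q))"
    using m y c x by (simp add: ln_mult)
  then show ?thesis using m y c x by simp
qed

subsection \<open>A strict discrete Hardy inequality\<close>

definition avg :: "(nat \<Rightarrow> real) \<Rightarrow> nat \<Rightarrow> real" where
  "avg a n = psum a n / real n"

lemma psum_nonneg: "(\<And>n. n \<ge> 1 \<Longrightarrow> a n \<ge> 0) \<Longrightarrow> psum a n \<ge> 0"
  unfolding psum_def by (intro sum_nonneg) auto

lemma psum_Suc: "psum a (Suc n) = psum a n + a (Suc n)"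
  unfolding psum_def by simp

lemma avg_nonneg: "(\<And>n. n \<ge> 1 \<Longrightarrow> a n \<ge> 0) \<Longrightarrow> avg a n \<ge> 0"
  unfolding avg_def using psum_nonneg[of a n] by simp

lemma real_mult_avg: "real n * avg a n = psum a n"
  unfolding avg_def by (cases "n = 0") (auto simp: psum_def)

lemma term_eq_avg_diff: "a (Suc j) = real (Suc j) * avg a (Suc j) - real j * avg a j"
  unfolding real_mult_avg psum_Suc by simp

lemma admissible_nonneg: "admissible P a \<Longrightarrow> n \<ge> 1 \<Longrightarrow> a n \<ge> 0"
  unfolding admissible_def by auto

text \<open>The one-step identity behind the telescoping proof of Hardy's inequality, used with
  \<open>x = \<alpha>\<^sub>n\<close>, \<open>y = \<alpha>\<^sub>n\<^sub>-\<^sub>1\<close>, \<open>X = x^P\<close>, \<open>Z = x^(P-1)\<close>, \<open>W = y^P\<close>, so that \<open>n x - j y = a\<^sub>n\<close>.\<close>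

lemma hardy_step_identity:
  fixes X Z x W y P Q n j :: real
  assumes P: "P > 1" and Q: "Q = P/(P-1)" and XZ: "X = Z * x" and n: "n = j + 1"
  shows "X - Q * Z * (n * x - j * y)
       = (j * W - n * X)/(P-1) - Q * j * (((P-1)*X + W)/P - Z * y)"
proof -
  have P1: "P - 1 \<noteq> 0" "P \<noteq> 0" using P by auto
  have e1: "Q * j * ((P-1)*X/P) = j * X" using P1 unfolding Q by (simp add: field_simps)
  have e2: "Q * j * (W/P) = j * W / (P-1)" using P1 unfolding Q by (simp add: field_simps)
  have e3: "X - Q * n * X = - n * X / (P-1) - j * X"
    using P1 unfolding Q n by (simp add: field_simps)
  have "(j * W - n * X)/(P-1) - Q * j * (((P-1)*X + W)/P - Z * y)
      = (j * W - n * X)/(P-1) - Q * j * ((P-1)*X/P) - Q * j * (W/P) + Q * j * Z * y"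
    by (simp add: add_divide_distrib diff_divide_distrib algebra_simps)
  also have "\<dots> = - n * X / (P-1) - j * X + Q * j * Z * y" unfolding e1 e2
    by (simp add: diff_divide_distrib)
  also have "\<dots> = X - Q * n * X + Q * j * Z * y" using e3 by simp
  also have "\<dots> = X - Q * Z * (n * x - j * y)" unfolding XZ by (simp add: algebra_simps)
  finally show ?thesis by simp
qed

definition hardy_defect :: "real \<Rightarrow> (nat \<Rightarrow> real) \<Rightarrow> nat \<Rightarrow> real" where
  "hardy_defect P a N = (\<Sum>n=1..N. (real n - 1) * young_defect P (avg a n) (avg a (n - 1)))"

lemma hardy_defect_nonneg:
  assumes P: "P > 1" and nonneg: "\<And>n. n \<ge> 1 \<Longrightarrow> a n \<ge> 0"
  shows "hardy_defect P a N \<ge> 0"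
proof -
  have "(real n - 1) * young_defect P (avg a n) (avg a (n - 1)) \<ge> 0" if "n \<ge> 1" for n
    using that P avg_nonneg[OF nonneg] by (intro mult_nonneg_nonneg young_defect_nonneg) auto
  then show ?thesis unfolding hardy_defect_def by (intro sum_nonneg) auto
qed

lemma hardy_telescoping:
  assumes P: "P > 1" and Q: "Q = P/(P-1)" and nonneg: "\<And>n. n \<ge> 1 \<Longrightarrow> a n \<ge> 0"
  shows "(\<Sum>n=1..N. avg a n powr P - Q * avg a n powr (P - 1) * a n)
       = - real N * avg a N powr P / (P-1) - Q * hardy_defect P a N"
proof (induction N)
  case 0 then show ?case by (simp add: hardy_defect_def)
next
  case (Suc N)
  have "avg a (Suc N) powr P - Q * avg a (Suc N) powr (P - 1) * a (Suc N)
      = (real N * avg a N powr P - real (Suc N) * avg a (Suc N) powr P)/(P-1)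
        - Q * real N * young_defect P (avg a (Suc N)) (avg a N)"
    unfolding young_defect_def term_eq_avg_diff[of a N]
    by (rule hardy_step_identity[OF P Q])
       (use powr_mult_base[OF avg_nonneg[OF nonneg]] in \<open>auto simp: mult.commute\<close>)
  then show ?case using Suc
    by (simp add: hardy_defect_def add_divide_distrib diff_divide_distrib algebra_simps)
qed

lemma hardy_partial_sums_bound:
  fixes a :: "nat \<Rightarrow> real" and P Q :: real and N :: nat
  defines "S \<equiv> \<Sum>n=1..N. avg a n powr P"
  assumes P: "P > 1" and PQ: "1/P + 1/Q = 1" and nonneg: "\<And>n. n \<ge> 1 \<Longrightarrow> a n \<ge> 0"
    and summable: "(\<lambda>n. a n powr P) summable_on {1..}" and S_pos: "S > 0"
  shows "S powr (1/P)
    \<le> Q * infsum (\<lambda>n. a n powr P) {1..} powr (1/P) - Q * hardy_defect P a N / S powr (1/Q)"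
proof -
  have Q1: "Q > 1" and Q: "Q = P/(P-1)" and PQ': "1/Q + 1/P = 1"
    using conjugate_exponent[OF P PQ] PQ by auto
  define Nrm where "Nrm = infsum (\<lambda>n. a n powr P) {1..} powr (1/P)"
  define H where "H = (\<Sum>n=1..N. avg a n powr (P - 1) * a n)"
  have "S - Q * H = (\<Sum>n=1..N. avg a n powr P - Q * avg a n powr (P - 1) * a n)"
    unfolding S_def H_def by (simp add: sum_subtractf sum_distrib_left mult.assoc)
  also have "\<dots> = - real N * avg a N powr P / (P-1) - Q * hardy_defect P a N"
    by (rule hardy_telescoping[OF P Q nonneg])
  also have "\<dots> \<le> - Q * hardy_defect P a N" using P by (simp add: divide_nonneg_pos)
  finally have S_le: "S \<le> Q * H - Q * hardy_defect P a N" by simp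
  have "H \<le> (\<Sum>n=1..N. (avg a n powr (P - 1)) powr Q) powr (1/Q) * (\<Sum>n=1..N. a n powr P) powr (1/P)"
    unfolding H_def
    by (rule Hoelder_inequality_sum[OF Q1 PQ']) (use nonneg avg_nonneg[OF nonneg] in auto)
  also have "(\<Sum>n=1..N. (avg a n powr (P - 1)) powr Q) = S"
  proof -
    have "(P - 1) * Q = P" using P unfolding Q by (simp add: field_simps)
    then show ?thesis unfolding S_def by (simp add: powr_powr)
  qed
  also have "(\<Sum>n=1..N. a n powr P) powr (1/P) \<le> Nrm"
    unfolding Nrm_def using P
    by (intro powr_mono2 partial_sum_le_infsum_atLeast1[OF summable]) (auto intro: sum_nonneg)
  finally have "H \<le> S powr (1/Q) * Nrm" by (simp add: mult_left_mono)
  with S_le Q1 have "S \<le> Q * S powr (1/Q) * Nrm - Q * hardy_defect P a N"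
    by (smt (verit, best) mult.assoc mult_left_mono)
  moreover have "S = S powr (1/P) * S powr (1/Q)"
    using S_pos PQ by (simp add: powr_add[symmetric])
  ultimately show ?thesis using S_pos unfolding Nrm_def by (simp add: field_simps)
qed

lemma avg_jump:
  assumes summable: "(\<lambda>n. a n powr P) summable_on {1..}"
    and pos: "infsum (\<lambda>n. a n powr P) {1..} > 0"
  shows "\<exists>n\<ge>2. avg a n \<noteq> avg a (n - 1)"
proof (rule ccontr)
  assume "\<not> ?thesis"
  then have const: "avg a (Suc n) = avg a 1" for n
    by (induction n) (auto simp: not_less_eq_eq[symmetric] dest: spec[of _ "Suc (Suc _)"])
  have a_const: "a n = avg a 1" if n: "n \<ge> 1" for n
  proof -
    obtain j where "n = Suc j" using n by (cases n) auto
    then show ?thesis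
      using term_eq_avg_diff[of a j] const[of j] const[of "j - 1"] by (cases j) (auto simp: algebra_simps)
  qed
  have "(\<lambda>n::nat. avg a 1 powr P) summable_on {1..}"
    by (rule summable_on_cong[THEN iffD1, OF _ summable]) (simp add: a_const)
  then have "avg a 1 powr P = 0" by (rule constant_summable_on_atLeast1_eq_0) simp
  then have "infsum (\<lambda>n. a n powr P) {1..} = 0"
    using a_const by (intro infsum_0) auto
  then show False using pos by simp
qed

theorem Hardy_inequality:
  fixes a :: "nat \<Rightarrow> real" and P Q :: real
  assumes P: "P > 1" and PQ: "1/P + 1/Q = 1" and nonneg: "\<And>n. n \<ge> 1 \<Longrightarrow> a n \<ge> 0"
    and summable: "(\<lambda>n. a n powr P) summable_on {1..}"
  shows "(\<lambda>n. avg a n powr P) summable_on {1..}"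
    and "infsum (\<lambda>n. avg a n powr P) {1..} \<le> Q powr P * infsum (\<lambda>n. a n powr P) {1..}"
proof -
  have Q1: "Q > 1" using conjugate_exponent[OF P PQ] by simp
  define Nrm where "Nrm = infsum (\<lambda>n. a n powr P) {1..} powr (1/P)"
  have "(\<Sum>n=1..N. avg a n powr P) \<le> (Q * Nrm) powr P" for N
  proof (cases "(\<Sum>n=1..N. avg a n powr P) = 0")
    case False
    moreover have "(\<Sum>n=1..N. avg a n powr P) \<ge> 0" by (intro sum_nonneg) simp
    ultimately have "(\<Sum>n=1..N. avg a n powr P) > 0" by linarith
    moreover have "Q * hardy_defect P a N / (\<Sum>n=1..N. avg a n powr P) powr (1/Q) \<ge> 0"
      using Q1 hardy_defect_nonneg[OF P nonneg] by simp
    ultimately have "(\<Sum>n=1..N. avg a n powr P) powr (1/P) \<le> Q * Nrm"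
      using hardy_partial_sums_bound[OF P PQ nonneg summable] unfolding Nrm_def by fastforce
    then show ?thesis using P by (intro le_powr_if_root_le) (auto intro: sum_nonneg)
  qed simp
  moreover have "(Q * Nrm) powr P = Q powr P * infsum (\<lambda>n. a n powr P) {1..}"
    using Q1 P infsum_nonneg[of "{1..}" "\<lambda>n. a n powr P"] unfolding Nrm_def
    by (simp add: powr_mult powr_powr)
  ultimately have "(\<Sum>n=1..N. avg a n powr P) \<le> Q powr P * infsum (\<lambda>n. a n powr P) {1..}" for N
    by simp
  then show "(\<lambda>n. avg a n powr P) summable_on {1..}"
    and "infsum (\<lambda>n. avg a n powr P) {1..} \<le> Q powr P * infsum (\<lambda>n. a n powr P) {1..}"
    by (rule nonneg_summable_on_atLeast1_if_partial_sums_bounded[rotated], simp)+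
qed

lemma hardy_defect_eventually_pos:
  assumes P: "P > 1" and nonneg: "\<And>n. n \<ge> 1 \<Longrightarrow> a n \<ge> 0"
    and summable: "(\<lambda>n. a n powr P) summable_on {1..}" and pos: "infsum (\<lambda>n. a n powr P) {1..} > 0"
  obtains n0 \<delta> where "\<delta> > 0" "(\<Sum>n=1..n0. avg a n powr P) > 0"
    "\<And>N. N \<ge> n0 \<Longrightarrow> hardy_defect P a N \<ge> \<delta>"
proof -
  obtain n0 where n0: "n0 \<ge> 2" "avg a n0 \<noteq> avg a (n0 - 1)"
    using avg_jump[OF summable pos] by blast
  define \<delta> where "\<delta> = (real n0 - 1) * young_defect P (avg a n0) (avg a (n0 - 1))"
  have "\<delta> > 0"
    using young_defect_pos[OF P avg_nonneg[OF nonneg] avg_nonneg[OF nonneg] n0(2)] n0(1)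
    unfolding \<delta>_def by simp
  moreover have "(\<Sum>n=1..n0. avg a n powr P) > 0"
  proof (rule ccontr)
    assume "\<not> (\<Sum>n=1..n0. avg a n powr P) > 0"
    moreover have "(\<Sum>n=1..n0. avg a n powr P) \<ge> 0" by (intro sum_nonneg) simp
    ultimately have "(\<Sum>n=1..n0. avg a n powr P) = 0" by linarith
    then have "\<forall>n\<in>{1..n0}. avg a n powr P = 0" by (simp add: sum_nonneg_eq_0_iff)
    then have "avg a n0 = 0" "avg a (n0 - 1) = 0" using n0(1) by auto
    then show False using n0(2) by simp
  qed
  moreover have "hardy_defect P a N \<ge> \<delta>" if "N \<ge> n0" for N
  proof -
    have "(real n - 1) * young_defect P (avg a n) (avg a (n - 1)) \<ge> 0" if "n \<ge> 1" for n
      using that P avg_nonneg[OF nonneg] by (intro mult_nonneg_nonneg young_defect_nonneg) auto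
    then show ?thesis
      unfolding hardy_defect_def \<delta>_def by (rule member_le_sum[rotated]) (use that n0 in auto)
  qed
  ultimately show ?thesis using that by blast
qed

lemma hardy_partial_sums_uniform_bound:
  fixes a :: "nat \<Rightarrow> real" and P Q \<delta> :: real and n0 N :: nat
  assumes P: "P > 1" and PQ: "1/P + 1/Q = 1" and nonneg: "\<And>n. n \<ge> 1 \<Longrightarrow> a n \<ge> 0"
    and summable: "(\<lambda>n. a n powr P) summable_on {1..}"
    and \<delta>: "\<delta> > 0" and S_n0: "(\<Sum>n=1..n0. avg a n powr P) > 0"
    and defect: "\<And>N. N \<ge> n0 \<Longrightarrow> hardy_defect P a N \<ge> \<delta>"
  shows "(\<Sum>n=1..N. avg a n powr P) powr (1/P)
    \<le> Q * infsum (\<lambda>n. a n powr P) {1..} powr (1/P) - Q * \<delta> / infsum (\<lambda>n. avg a n powr P) {1..} powr (1/Q)"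
proof -
  have Q1: "Q > 1" using conjugate_exponent[OF P PQ] by simp
  define S where "S N = (\<Sum>n=1..N. avg a n powr P)" for N
  define ST where "ST = infsum (\<lambda>n. avg a n powr P) {1..}"
  have S_mono: "S N \<le> S M" if "N \<le> M" for N M
    unfolding S_def using that by (intro sum_mono2) auto
  have S_le_ST: "S N \<le> ST" for N
    unfolding S_def ST_def
    by (rule partial_sum_le_infsum_atLeast1[OF Hardy_inequality(1)[OF P PQ nonneg summable]]) auto
  let ?M = "max N n0"
  have S_M: "S ?M > 0" using S_mono[of n0 ?M] S_n0 unfolding S_def by simp
  have "Q * \<delta> / ST powr (1/Q) \<le> Q * hardy_defect P a ?M / S ?M powr (1/Q)"
    using Q1 \<delta> defect[of ?M] S_M S_le_ST[of ?M] by (intro frac_le powr_mono2) auto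
  then have "S ?M powr (1/P) \<le> Q * infsum (\<lambda>n. a n powr P) {1..} powr (1/P) - Q * \<delta> / ST powr (1/Q)"
    using hardy_partial_sums_bound[OF P PQ nonneg summable, of ?M] S_M unfolding S_def by linarith
  moreover have "S N powr (1/P) \<le> S ?M powr (1/P)"
    using S_mono[of N ?M] P by (intro powr_mono2) (auto simp: S_def intro: sum_nonneg)
  ultimately show ?thesis unfolding S_def ST_def by linarith
qed

theorem Hardy_inequality_strict:
  fixes a :: "nat \<Rightarrow> real" and P Q :: real
  assumes P: "P > 1" and PQ: "1/P + 1/Q = 1" and adm: "admissible P a"
  shows "(\<lambda>n. avg a n powr P) summable_on {1..}"
    and "infsum (\<lambda>n. avg a n powr P) {1..} < Q powr P * infsum (\<lambda>n. a n powr P) {1..}"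
proof -
  from adm have nonneg: "\<And>n. n \<ge> 1 \<Longrightarrow> a n \<ge> 0"
    and summable: "(\<lambda>n. a n powr P) summable_on {1..}"
    and pos: "infsum (\<lambda>n. a n powr P) {1..} > 0" unfolding admissible_def by auto
  show summable_avg: "(\<lambda>n. avg a n powr P) summable_on {1..}"
    by (rule Hardy_inequality(1)[OF P PQ nonneg summable])
  have Q1: "Q > 1" using conjugate_exponent[OF P PQ] by simp
  define Nrm where "Nrm = infsum (\<lambda>n. a n powr P) {1..} powr (1/P)"
  define ST where "ST = infsum (\<lambda>n. avg a n powr P) {1..}"
  obtain n0 \<delta> where \<delta>: "\<delta> > 0" and S_n0: "(\<Sum>n=1..n0. avg a n powr P) > 0"
    and defect: "\<And>N. N \<ge> n0 \<Longrightarrow> hardy_defect P a N \<ge> \<delta>"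
    using hardy_defect_eventually_pos[OF P nonneg summable pos] by blast
  define B where "B = Q * Nrm - Q * \<delta> / ST powr (1/Q)"
  have root_le_B: "(\<Sum>n=1..N. avg a n powr P) powr (1/P) \<le> B" for N
    unfolding B_def Nrm_def ST_def
    by (rule hardy_partial_sums_uniform_bound[OF P PQ nonneg summable \<delta> S_n0 defect])
  have "(\<Sum>n=1..N. avg a n powr P) \<le> B powr P" for N
    using P by (intro le_powr_if_root_le[OF _ _ root_le_B]) (auto intro: sum_nonneg)
  then have "ST \<le> B powr P"
    unfolding ST_def by (rule nonneg_summable_on_atLeast1_if_partial_sums_bounded(2)[rotated]) simp
  also have "\<dots> < (Q * Nrm) powr P"
  proof (rule powr_less_mono2)
    show "0 \<le> B" using root_le_B[of 0] by (smt (verit) powr_ge_zero)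
    have "0 < ST" unfolding ST_def
      using S_n0 partial_sum_le_infsum_atLeast1[OF summable_avg, of 1 n0] by simp
    then show "B < Q * Nrm" unfolding B_def using Q1 \<delta> by simp
  qed (use P in simp)
  also have "\<dots> = Q powr P * infsum (\<lambda>n. a n powr P) {1..}"
    using Q1 pos P unfolding Nrm_def by (simp add: powr_mult powr_powr)
  finally show "infsum (\<lambda>n. avg a n powr P) {1..} < Q powr P * infsum (\<lambda>n. a n powr P) {1..}"
    unfolding ST_def .
qed
subsection \<open>Sums of decreasing functions and of powers\<close>

lemma const_le_integral_if_le_on_interior:
  fixes f :: "real \<Rightarrow> real"
  assumes f: "f integrable_on {c..d}" and cd: "c \<le> d" and le: "\<And>x. c < x \<Longrightarrow> x < d \<Longrightarrow> b \<le> f x"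
  shows "(d - c) * b \<le> integral {c..d} f"
proof -
  have "(d - c) * b = integral {c<..<d} (\<lambda>_. b)"
    using cd integral_open_interval_real[of c d "\<lambda>_. b"] by simp
  also have "\<dots> \<le> integral {c<..<d} f"
    using f le integrable_on_open_interval_real integrable_const_ivl
    by (intro integral_le) auto
  also have "\<dots> = integral {c..d} f" by (rule integral_open_interval_real[symmetric])
  finally show ?thesis .
qed

lemma decreasing_sum_le_integral:
  fixes \<phi> :: "real \<Rightarrow> real"
  assumes dec: "\<And>x z. 0 < x \<Longrightarrow> x \<le> z \<Longrightarrow> \<phi> z \<le> \<phi> x"
    and nn: "\<And>x. x > 0 \<Longrightarrow> \<phi> x \<ge> 0"
    and int: "\<phi> integrable_on {0<..}" and y: "y > 0"
  shows "(\<Sum>m=1..N. \<phi> (real m / y) / y) \<le> integral {0<..} \<phi>"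
proof -
  define \<psi> where "\<psi> u = (if u \<in> {0<..} then \<phi> u else 0)" for u :: real
  have \<psi>int: "\<psi> integrable_on UNIV" unfolding \<psi>_def using int integrable_restrict_UNIV by blast
  have \<psi>0: "\<psi> u \<ge> 0" for u unfolding \<psi>_def using nn by auto
  have \<psi>sub: "\<psi> integrable_on {c..d}" for c d by (rule integrable_on_subinterval[OF \<psi>int]) auto
  have piece: "(d - c) * \<phi> d \<le> integral {c..d} \<psi>" if "0 \<le> c" "c < d" for c d
    using that dec[of _ d] by (intro const_le_integral_if_le_on_interior[OF \<psi>sub]) (auto simp: \<psi>_def)
  have comb: "integral {0..real N / y} \<psi> = (\<Sum>m=1..N. integral {(real m - 1)/y..real m/y} \<psi>)" for N
  proof (induction N)
    case 0 then show ?case by simp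
  next
    case (Suc N)
    have "integral {0..real N / y} \<psi> + integral {real N / y..real (Suc N) / y} \<psi> = integral {0..real (Suc N) / y} \<psi>"
      by (rule Henstock_Kurzweil_Integration.integral_combine) (use y \<psi>sub in \<open>auto simp: divide_right_mono\<close>)
    then show ?case using Suc by simp
  qed
  have "(\<Sum>m=1..N. \<phi> (real m / y) / y) \<le> (\<Sum>m=1..N. integral {(real m - 1)/y..real m/y} \<psi>)"
  proof (rule sum_mono)
    fix m assume "m \<in> {1..N}"
    then have "0 \<le> (real m - 1)/y" "(real m - 1)/y < real m / y" using y by (auto simp: divide_strict_right_mono)
    from piece[OF this] have "(real m / y - (real m - 1)/y) * \<phi> (real m / y) \<le> integral {(real m - 1)/y..real m/y} \<psi>" .
    moreover have "real m / y - (real m - 1)/y = 1 / y" using y by (simp add: field_simps)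
    ultimately show "\<phi> (real m / y) / y \<le> integral {(real m - 1)/y..real m/y} \<psi>" by simp
  qed
  also have "\<dots> = integral {0..real N / y} \<psi>" by (rule comb[symmetric])
  also have "\<dots> \<le> integral UNIV \<psi>"
    by (rule integral_subset_le) (use \<psi>sub \<psi>int \<psi>0 in auto)
  also have "\<dots> = integral {0<..} \<phi>" unfolding \<psi>_def by (rule Henstock_Kurzweil_Integration.integral_restrict_UNIV)
  finally show ?thesis .
qed

lemma integral_le_decreasing_sum:
  fixes \<phi> :: "real \<Rightarrow> real"
  assumes dec: "\<And>x z. 0 < x \<Longrightarrow> x \<le> z \<Longrightarrow> \<phi> z \<le> \<phi> x"
    and int: "\<phi> integrable_on {0<..}" and y: "y > 0" and N0: "N0 \<ge> 1" and N1: "N1 \<ge> N0"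
  shows "integral {real N0 / y..real (N1 + 1) / y} \<phi> \<le> (\<Sum>m=N0..N1. \<phi> (real m / y) / y)"
  using N1
proof (induction N1 rule: dec_induct)
  have sub: "\<phi> integrable_on {c..d}" if "0 < c" for c d
    by (rule integrable_on_subinterval[OF int]) (use that in auto)
  have piece: "integral {c..d} \<phi> \<le> (d - c) * \<phi> c" if cd: "0 < c" "c \<le> d" for c d
  proof -
    have "integral {c..d} \<phi> \<le> integral {c..d} (\<lambda>_. \<phi> c)"
      by (rule integral_le) (use sub[OF cd(1)] dec cd in auto)
    also have "\<dots> = (d - c) * \<phi> c" using cd by simp
    finally show ?thesis .
  qed
  {
    case base
    have "integral {real N0 / y..real (N0 + 1) / y} \<phi> \<le> (real (N0 + 1) / y - real N0 / y) * \<phi> (real N0 / y)"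
      by (rule piece) (use y N0 in \<open>auto simp: divide_right_mono\<close>)
    also have "real (N0 + 1) / y - real N0 / y = 1 / y" using y by (simp add: field_simps)
    finally show ?case by simp
  next
    case (step n)
    have c0: "real N0 / y > 0" using y N0 by simp
    have "integral {real N0 / y..real (Suc n + 1) / y} \<phi>
        = integral {real N0 / y..real (n + 1) / y} \<phi> + integral {real (n + 1) / y..real (Suc n + 1) / y} \<phi>"
      using Henstock_Kurzweil_Integration.integral_combine[where a="real N0 / y" and c="real (n+1)/y" and b="real (Suc n + 1)/y" and f=\<phi>] y step(1) sub[OF c0]
      by (simp add: divide_right_mono)
    also have "integral {real (n + 1) / y..real (Suc n + 1) / y} \<phi> \<le> (real (Suc n + 1) / y - real (n + 1) / y) * \<phi> (real (n+1) / y)"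
      by (rule piece) (use y in \<open>auto simp: divide_right_mono\<close>)
    also have "real (Suc n + 1) / y - real (n + 1) / y = 1 / y" using y by (simp add: field_simps)
    finally show ?case using step(3) step(1) by simp
  }
qed

lemma scaled_decreasing_sum_bound:
  fixes \<phi> :: "real \<Rightarrow> real" and f :: "nat \<Rightarrow> real"
  assumes dec: "\<And>x z. 0 < x \<Longrightarrow> x \<le> z \<Longrightarrow> \<phi> z \<le> \<phi> x"
    and nonneg: "\<And>x. x > 0 \<Longrightarrow> \<phi> x \<ge> 0"
    and int: "\<phi> integrable_on {0<..}" and y: "y > 0" and c: "c \<ge> 0"
    and f: "\<And>m. m \<ge> 1 \<Longrightarrow> f m = c * \<phi> (real m / y)"
  shows "f summable_on {1..}" "infsum f {1..} \<le> c * y * integral {0<..} \<phi>"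
proof -
  have bound: "(\<Sum>m=1..N. f m) \<le> c * y * integral {0<..} \<phi>" for N
  proof -
    have "(\<Sum>m=1..N. f m) = c * y * (\<Sum>m=1..N. \<phi> (real m / y) / y)"
      using y by (simp add: f sum_distrib_left sum_divide_distrib)
    also have "\<dots> \<le> c * y * integral {0<..} \<phi>"
      using decreasing_sum_le_integral[OF dec nonneg int y] c y by (intro mult_left_mono) auto
    finally show ?thesis .
  qed
  have "f m \<ge> 0" if "m \<ge> 1" for m using that f nonneg c y by simp
  then show "f summable_on {1..}" "infsum f {1..} \<le> c * y * integral {0<..} \<phi>"
    using nonneg_summable_on_atLeast1_if_partial_sums_bounded[OF _ bound] by auto
qed

lemma powr_diff_MVT:
  fixes x c :: real
  assumes x: "x > 0" and c: "c < 1"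
  shows "\<exists>\<xi>. (x+1) powr c - x powr c = c * \<xi> powr (c-1) \<and> (x+1) powr (c-1) \<le> \<xi> powr (c-1) \<and> \<xi> powr (c-1) \<le> x powr (c-1)"
proof -
  have "\<exists>z. x < z \<and> z < x + 1 \<and> ((x+1) powr c - x powr c = (x + 1 - x) * (c * z powr (c - 1)))"
    by (rule MVT2) (use x in \<open>auto intro!: has_real_derivative_powr\<close>)
  then obtain z where z: "x < z" "z < x + 1" "(x+1) powr c - x powr c = (x + 1 - x) * (c * z powr (c - 1))" by blast
  have "(x+1) powr (c-1) \<le> z powr (c-1)" using z x c by (intro powr_mono2') auto
  moreover have "z powr (c-1) \<le> x powr (c-1)" using z x c by (intro powr_mono2') auto
  ultimately show ?thesis using z(3) by auto
qed

lemma powr_increment_le: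
  fixes x c :: real assumes x: "x > 0" and c: "0 < c" "c < 1"
  shows "(x+1) powr c - x powr c \<le> c * x powr (c - 1)"
  using powr_diff_MVT[OF x c(2)] c by (auto intro: mult_left_mono order.trans[rotated])

lemma neg_powr_decrement_bounds:
  fixes x e :: real assumes x: "x > 0" and e: "e > 0"
  shows "e * (x+1) powr (-e-1) \<le> x powr (-e) - (x+1) powr (-e)"
    "x powr (-e) - (x+1) powr (-e) \<le> e * x powr (-e-1)"
proof -
  obtain \<xi> where xi: "(x+1) powr (-e) - x powr (-e) = (-e) * \<xi> powr (-e-1)"
    "(x+1) powr (-e-1) \<le> \<xi> powr (-e-1)" "\<xi> powr (-e-1) \<le> x powr (-e-1)"
    using powr_diff_MVT[OF x, of "-e"] e by auto
  have d: "x powr (-e) - (x+1) powr (-e) = e * \<xi> powr (-e-1)" using xi(1) by simp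
  show "e * (x+1) powr (-e-1) \<le> x powr (-e) - (x+1) powr (-e)"
    unfolding d using xi(2) e by (intro mult_left_mono) auto
  show "x powr (-e) - (x+1) powr (-e) \<le> e * x powr (-e-1)"
    unfolding d using xi(3) e by (intro mult_left_mono) auto
qed

lemma zeta_partial_sum_le:
  fixes e :: real assumes e: "e > 0"
  shows "(\<Sum>n=1..L. real n powr (-e-1)) \<le> 1 + 1/e"
proof -
  have ind: "(\<Sum>n=1..L. real n powr (-e-1)) \<le> 1 + (1 - real L powr (-e))/e" if "L \<ge> 1" for L
    using that
  proof (induction L rule: dec_induct)
    case base then show ?case by simp
  next
    case (step L)
    have Lp: "real L > 0" using step(1) by simp
    have "(\<Sum>n=1..Suc L. real n powr (-e-1)) = (\<Sum>n=1..L. real n powr (-e-1)) + real (Suc L) powr (-e-1)"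
      by simp
    also have "\<dots> \<le> 1 + (1 - real L powr (-e))/e + (real L powr (-e) - real (Suc L) powr (-e))/e"
    proof -
      have "e * (real L + 1) powr (-e-1) \<le> real L powr (-e) - (real L + 1) powr (-e)"
        by (rule neg_powr_decrement_bounds(1)[OF Lp e])
      then have "real (Suc L) powr (-e-1) \<le> (real L powr (-e) - real (Suc L) powr (-e))/e"
        using e by (simp add: field_simps add.commute)
      then show ?thesis using step(3) by linarith
    qed
    also have "\<dots> = 1 + (1 - real (Suc L) powr (-e))/e" using e by (simp add: field_simps)
    finally show ?case .
  qed
  show ?thesis
  proof (cases "L \<ge> 1")
    case True
    have "(1 - real L powr (-e))/e \<le> 1/e" using e by (intro divide_right_mono) auto
    then show ?thesis using ind[OF True] by linarith
  next
    case False then show ?thesis using e by simp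
  qed
qed

lemma zeta_partial_sum_ge:
  fixes e :: real assumes e: "e > 0" and L0: "L0 \<ge> 1" and L: "L \<ge> L0"
  shows "(\<Sum>n=L0..L. real n powr (-e-1)) \<ge> (real L0 powr (-e) - real (L+1) powr (-e))/e"
  using L
proof (induction L rule: dec_induct)
  case base
  have Lp: "real L0 > 0" using L0 by simp
  have "real L0 powr (-e) - (real L0 + 1) powr (-e) \<le> e * real L0 powr (-e-1)" by (rule neg_powr_decrement_bounds(2)[OF Lp e])
  then show ?case using e by (simp add: field_simps add.commute)
next
  case (step L)
  have Lp: "real (L+1) > 0" by simp
  have "real (L+1) powr (-e) - (real (L+1) + 1) powr (-e) \<le> e * real (L+1) powr (-e-1)" by (rule neg_powr_decrement_bounds(2)[OF Lp e])
  then have "(real (L+1) powr (-e) - real (Suc L + 1) powr (-e))/e \<le> real (Suc L) powr (-e-1)"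
    using e by (simp add: field_simps add.commute)
  moreover have "(\<Sum>n=L0..Suc L. real n powr (-e-1)) = (\<Sum>n=L0..L. real n powr (-e-1)) + real (Suc L) powr (-e-1)"
    using step(1) L0 by simp
  ultimately show ?case using step(3) e by (simp add: diff_divide_distrib)
qed

lemma zeta_bounds:
  fixes e :: real assumes e: "e > 0"
  shows "(\<lambda>n. real n powr (-e-1)) summable_on {1..}"
    "infsum (\<lambda>n. real n powr (-e-1)) {1..} \<le> 1 + 1/e"
    "infsum (\<lambda>n. real n powr (-e-1)) {1..} \<ge> 1"
proof -
  show sm: "(\<lambda>n. real n powr (-e-1)) summable_on {1..}"
    by (rule nonneg_summable_on_atLeast1_if_partial_sums_bounded(1)[OF _ zeta_partial_sum_le[OF e]]) simp
  show "infsum (\<lambda>n. real n powr (-e-1)) {1..} \<le> 1 + 1/e"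
    by (rule nonneg_summable_on_atLeast1_if_partial_sums_bounded(2)[OF _ zeta_partial_sum_le[OF e]]) simp
  have "(\<Sum>n=1..1. real n powr (-e-1)) \<le> infsum (\<lambda>n. real n powr (-e-1)) {1..}"
    by (rule partial_sum_le_infsum_atLeast1[OF sm]) simp_all
  then show "infsum (\<lambda>n. real n powr (-e-1)) {1..} \<ge> 1" by simp
qed

lemma infsum_ge_if_tail_ge_zeta:
  fixes f :: "nat \<Rightarrow> real"
  assumes summable: "f summable_on {1..}" and nonneg: "\<And>n. n \<ge> 1 \<Longrightarrow> f n \<ge> 0"
    and e: "e > 0" and c: "c \<ge> 0" and L0: "L0 \<ge> 1"
    and tail: "\<And>n. n \<ge> L0 \<Longrightarrow> f n \<ge> c * real n powr (-e-1)"
  shows "c * real L0 powr (-e) / e \<le> infsum f {1..}"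
proof -
  have partial: "c * ((real L0 powr (-e) - real (Suc L) powr (-e))/e) \<le> infsum f {1..}" if L: "L \<ge> L0" for L
  proof -
    have "c * ((real L0 powr (-e) - real (L+1) powr (-e))/e) \<le> c * (\<Sum>n=L0..L. real n powr (-e-1))"
      using zeta_partial_sum_ge[OF e L0 L] c by (intro mult_left_mono) auto
    also have "\<dots> = (\<Sum>n=L0..L. c * real n powr (-e-1))" by (simp add: sum_distrib_left)
    also have "\<dots> \<le> (\<Sum>n=L0..L. f n)" by (rule sum_mono) (use tail in auto)
    also have "\<dots> \<le> infsum f {1..}" by (rule partial_sum_le_infsum_atLeast1[OF summable nonneg L0])
    finally show ?thesis by simp
  qed
  have "(\<lambda>L. real L powr (-e)) \<longlonglongrightarrow> 0"
    using e by (intro tendsto_neg_powr filterlim_real_sequentially) auto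
  then have "(\<lambda>L. real (Suc L) powr (-e)) \<longlonglongrightarrow> 0" by (rule LIMSEQ_Suc)
  then have "(\<lambda>L. c * ((real L0 powr (-e) - real (Suc L) powr (-e))/e)) \<longlonglongrightarrow> c * ((real L0 powr (-e) - 0)/e)"
    using e by (intro tendsto_intros) auto
  then have "c * ((real L0 powr (-e) - 0)/e) \<le> infsum f {1..}"
    by (rule tendsto_upperbound) (use partial in \<open>auto simp: eventually_sequentially\<close>)
  then show ?thesis by simp
qed

lemma sum_powr_lower:
  fixes c :: real
  assumes c: "0 < c" "c < 1"
  shows "(\<Sum>k=1..m. real k powr (c - 1)) \<ge> (real m powr c - 1) / c"
proof (cases "m = 0")
  case False
  have step: "real k powr (c - 1) \<ge> ((real k + 1) powr c - real k powr c) / c" if "k \<ge> 1" for k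
    using powr_increment_le[of "real k" c] that c by (simp add: field_simps)
  have "(\<Sum>k=1..m. real k powr (c - 1)) \<ge> (\<Sum>k=1..m. (real (Suc k) powr c - real k powr c) / c)"
    by (rule sum_mono) (use step in \<open>auto simp: add.commute\<close>)
  also have "(\<Sum>k=1..m. (real (Suc k) powr c - real k powr c) / c) = ((real m + 1) powr c - 1) / c"
    using sum_Suc_diff[of 1 m "\<lambda>k. real k powr c"] by (simp add: sum_divide_distrib[symmetric] add.commute)
  also have "\<dots> \<ge> (real m powr c - 1) / c"
    using c by (intro divide_right_mono diff_right_mono powr_mono2) auto
  finally show ?thesis .
qed (use c in simp)

subsection \<open>Test sequences\<close>

definition test_seq :: "real \<Rightarrow> real \<Rightarrow> nat \<Rightarrow> real" where
  "test_seq P e n = real n powr (-(1 + e) / P)"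

lemma test_seq_nonneg: "test_seq P e n \<ge> 0"
  unfolding test_seq_def by simp

lemma test_seq_powr:
  assumes "P \<noteq> 0"
  shows "test_seq P e n powr P = real n powr (-e-1)"
proof -
  have "-(1 + e) / P * P = -e - 1" using assms by simp
  then show ?thesis unfolding test_seq_def by (simp add: powr_powr)
qed

lemma admissible_test_seq:
  assumes "P > 0" "e > 0"
  shows "admissible P (test_seq P e)"
  unfolding admissible_def using zeta_bounds[OF assms(2)] test_seq_powr[of P e] assms
  by (simp add: test_seq_def)

lemma psum_test_seq_lower:
  fixes P Q e \<theta> :: real
  assumes P: "P > 1" and PQ: "1/P + 1/Q = 1" and e: "e > 0" "e \<le> P / (2*Q)"
    and N: "N \<ge> 1" and \<theta>: "0 \<le> \<theta>" "\<theta> \<le> 1 - real N powr (-1/(2*Q))" and m: "m \<ge> N"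
  shows "psum (test_seq P e) m \<ge> Q * \<theta> * real m powr (1/Q - e/P)"
proof -
  have Q: "Q > 1" using conjugate_exponent[OF P PQ] by simp
  define c where "c = 1/Q - e/P"
  have c1: "c \<ge> 1/(2*Q)"
  proof -
    have "e/P \<le> 1/(2*Q)" using e P Q by (simp add: field_simps)
    then show ?thesis unfolding c_def by simp
  qed
  have c2: "c \<le> 1/Q" unfolding c_def using e P by simp
  have c_pos: "c > 0" using c1 Q by (smt (verit) divide_pos_pos)
  have c_lt_1: "c < 1" using c2 Q by (smt (verit) divide_less_eq_1_pos)
  have "c - 1 = -(1 + e)/P" unfolding c_def using PQ P by (simp add: field_simps)
  then have psum_ge: "psum (test_seq P e) m \<ge> (real m powr c - 1)/c"
    using sum_powr_lower[OF c_pos c_lt_1, of m] unfolding psum_def test_seq_def by simp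
  have "1 = real N powr c * real N powr (-c)" using N by (simp add: powr_add[symmetric])
  also have "\<dots> \<le> real m powr c * real N powr (-1/(2*Q))"
    using m N c_pos c1 by (intro mult_mono powr_mono2 powr_mono) auto
  finally have "1 \<le> real m powr c * real N powr (-1/(2*Q))" .
  moreover have "real m powr c * \<theta> \<le> real m powr c * (1 - real N powr (-1/(2*Q)))"
    using \<theta> by (intro mult_left_mono) auto
  ultimately have m_c: "real m powr c * \<theta> \<le> real m powr c - 1" by (simp add: algebra_simps)
  have "Q \<le> 1/c" using c2 c_pos Q by (simp add: field_simps)
  then have "Q * (real m powr c * \<theta>) \<le> (1/c) * (real m powr c * \<theta>)"
    using \<theta> by (intro mult_right_mono) auto
  then have "Q * \<theta> * real m powr c \<le> (real m powr c * \<theta>) / c" by (simp add: mult_ac)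
  also have "\<dots> \<le> (real m powr c - 1) / c" using m_c c_pos by (intro divide_right_mono) auto
  also have "\<dots> \<le> psum (test_seq P e) m" by (rule psum_ge)
  finally show ?thesis unfolding c_def .
qed

lemma eventually_le_one_minus_neg_powr:
  fixes c \<theta> :: real
  assumes "c > 0" "\<theta> < 1"
  shows "eventually (\<lambda>N::nat. \<theta> \<le> 1 - real N powr (-c)) sequentially"
proof -
  have "(\<lambda>N. real N powr (-c)) \<longlonglongrightarrow> 0"
    using assms by (intro tendsto_neg_powr filterlim_real_sequentially) auto
  from order_tendstoD(2)[OF this, of "1 - \<theta>"] assms show ?thesis
    by (auto elim: eventually_mono)
qed

lemma small_exponent_exists:
  fixes \<theta> M L P b :: real
  assumes \<theta>: "0 < \<theta>" "\<theta> < 1" and pos: "M > 0" "L > 0" "P > 0" "b > 0"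
  shows "\<exists>e>0. \<theta> < M powr (-e/P) * L powr (-e) \<and> 1 + e < 1/\<theta> \<and> e \<le> b"
proof -
  have "((\<lambda>e. M powr (-e/P) * L powr (-e)) \<longlongrightarrow> M powr (-0/P) * L powr (-0)) (at_right 0)"
    using pos by (intro tendsto_intros) auto
  then have "eventually (\<lambda>e. \<theta> < M powr (-e/P) * L powr (-e)) (at_right 0)"
    using pos \<theta> by (intro order_tendstoD(1)) auto
  moreover have "eventually (\<lambda>e::real. 1 + e < 1/\<theta>) (at_right 0)"
    using \<theta> by (intro order_tendstoD(2)[of _ "1 + 0"] tendsto_intros) (auto simp: field_simps)
  moreover have "eventually (\<lambda>e::real. e < b \<and> e > 0) (at_right 0)"
    using pos by (intro eventually_conj order_tendstoD(2)[OF tendsto_ident_at] eventually_at_right_less)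
  ultimately have "eventually (\<lambda>e. e > 0 \<and> \<theta> < M powr (-e/P) * L powr (-e) \<and> 1 + e < 1/\<theta> \<and> e \<le> b) (at_right 0)"
    by eventually_elim auto
  then show ?thesis using eventually_happens'[OF trivial_limit_at_right_real] by blast
qed

subsection \<open>The kernel\<close>

locale homogeneous_kernel =
  fixes p q lam r s :: real and k :: "real \<Rightarrow> real \<Rightarrow> real"
  assumes p_gt_1: "p > 1" and conjugate: "1/p + 1/q = 1" and r_plus_s: "r + s = lam"
    and k_pos: "\<And>x y. x > 0 \<Longrightarrow> y > 0 \<Longrightarrow> k x y > 0"
    and k_homogeneous: "\<And>u x y. u > 0 \<Longrightarrow> x > 0 \<Longrightarrow> y > 0 \<Longrightarrow> k (u * x) (u * y) = u powr (- lam) * k x y"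
    and k_integrable: "set_integrable lborel {0<..} (\<lambda>u. k u 1 * u powr (r - 1))"
    and kint_pos: "kint k r > 0"
    and G_decreasing: "\<And>x z. 0 < x \<Longrightarrow> x \<le> z \<Longrightarrow> k z 1 * z powr (r - 1) \<le> k x 1 * x powr (r - 1)"
    and H_decreasing: "\<And>x z. 0 < x \<Longrightarrow> x \<le> z \<Longrightarrow> k 1 z * z powr (s - 1) \<le> k 1 x * x powr (s - 1)"
begin

definition G :: "real \<Rightarrow> real" where "G u = k u 1 * u powr (r - 1)"

definition H :: "real \<Rightarrow> real" where "H u = k 1 u * u powr (s - 1)"

abbreviation K :: real where "K \<equiv> kint k r"

lemma q_gt_1: "q > 1"
  using conjugate_exponent[OF p_gt_1 conjugate] by simp

lemma G_pos: "u > 0 \<Longrightarrow> G u > 0"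
  unfolding G_def using k_pos[of u 1] by simp

lemma H_pos: "u > 0 \<Longrightarrow> H u > 0"
  unfolding H_def using k_pos[of 1 u] by simp

lemma k_times_powr_eq_G:
  assumes "x > 0" "y > 0"
  shows "k x y * x powr (r - 1) = y powr (-s-1) * G (x / y)"
proof -
  have "k x y = y powr (-lam) * k (x/y) 1" using k_homogeneous[of y "x/y" 1] assms by simp
  moreover have "x powr (r - 1) = y powr (r - 1) * (x / y) powr (r - 1)"
    using assms by (simp add: powr_divide)
  moreover have "y powr (-lam) * y powr (r - 1) = y powr (-s-1)"
    by (simp add: powr_add[symmetric] flip: r_plus_s)
  ultimately show ?thesis unfolding G_def by (metis mult.assoc mult.commute)
qed

lemma k_times_powr_eq_H:
  assumes "x > 0" "y > 0"
  shows "k x y * y powr (s - 1) = x powr (-r-1) * H (y / x)"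
proof -
  have "k x y = x powr (-lam) * k 1 (y/x)" using k_homogeneous[of x 1 "y/x"] assms by simp
  moreover have "y powr (s - 1) = x powr (s - 1) * (y / x) powr (s - 1)"
    using assms by (simp add: powr_divide)
  moreover have "x powr (-lam) * x powr (s - 1) = x powr (-r-1)"
    by (simp add: powr_add[symmetric] flip: r_plus_s)
  ultimately show ?thesis unfolding H_def by (metis mult.assoc mult.commute)
qed

lemma G_integrable: "G integrable_on {0<..}" "integral {0<..} G = K"
proof -
  have G_int: "set_integrable lborel {0<..} G" using k_integrable by (simp add: G_def[abs_def])
  show "G integrable_on {0<..}" using set_borel_integral_eq_integral(1)[OF G_int] .
  show "integral {0<..} G = K"
    unfolding kint_def using set_borel_integral_eq_integral(2)[OF G_int] by (simp add: G_def[abs_def])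
qed

lemma H_eq_G_inverse:
  assumes u: "u > 0"
  shows "H u = \<bar>- 1 / u\<^sup>2\<bar> * G (1/u)"
proof -
  have "u powr (-s-1) * u powr (s-1) = u powr (- 2)" by (simp add: powr_add[symmetric])
  also have "\<dots> = 1 / u\<^sup>2" using u by (simp add: powr_minus powr_realpow divide_inverse)
  finally have "u powr (-s-1) * u powr (s-1) = 1 / u\<^sup>2" .
  then show ?thesis using k_times_powr_eq_G[of 1 u] u
    by (simp add: H_def) (metis (no_types, lifting) mult.assoc mult.commute times_divide_eq_right mult_1_right)
qed

lemma H_integrable: "H integrable_on {0<..}" "integral {0<..} H = K"
proof -
  have der: "((\<lambda>x. 1/x) has_field_derivative (- 1 / x\<^sup>2)) (at x within {0<..})"
    if "x \<in> {0<..}" for x :: real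
    using that by (auto intro!: derivative_eq_intros simp: power2_eq_square)
  have inj: "inj_on (\<lambda>x::real. 1/x) {0<..}" by (auto simp: inj_on_def)
  have img: "(\<lambda>x::real. 1/x) ` {0<..} = {0<..}"
    by (auto intro!: image_eqI[where x="1/x" for x])
  have G_abs: "G absolutely_integrable_on {0<..}"
    using absolutely_integrable_on_iff_nonneg[of "{0<..}" G] G_integrable(1) G_pos
    by (auto intro: less_imp_le)
  have "(\<lambda>x. \<bar>- 1 / x\<^sup>2\<bar> * G (1/x)) absolutely_integrable_on {0<..} \<and>
        integral {0<..} (\<lambda>x. \<bar>- 1 / x\<^sup>2\<bar> * G (1/x)) = K"
    using has_absolute_integral_change_of_variables_1'[OF _ der inj, of G K] img G_abs G_integrable(2)
    by simp
  then have "(\<lambda>x. \<bar>- 1 / x\<^sup>2\<bar> * G (1/x)) integrable_on {0<..}"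
     "integral {0<..} (\<lambda>x. \<bar>- 1 / x\<^sup>2\<bar> * G (1/x)) = K"
    using set_lebesgue_integral_eq_integral(1) by auto
  then show "H integrable_on {0<..}" "integral {0<..} H = K"
    using integrable_cong[of "{0<..}" H] integral_cong[of "{0<..}" H] H_eq_G_inverse by auto
qed

lemma row_weight_sum:
  assumes y: "y > 0"
  shows "(\<lambda>m. k (real m) y * real m powr (r - 1)) summable_on {1..}"
    "infsum (\<lambda>m. k (real m) y * real m powr (r - 1)) {1..} \<le> y powr (-s) * K"
proof -
  note bound = scaled_decreasing_sum_bound[OF G_decreasing[folded G_def] less_imp_le[OF G_pos]
      G_integrable(1) y, of "y powr (-s-1)" "\<lambda>m. k (real m) y * real m powr (r - 1)"]
  have "y powr (-s-1) * y = y powr (-s)" using y by (simp add: powr_diff)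
  then show "(\<lambda>m. k (real m) y * real m powr (r - 1)) summable_on {1..}"
    "infsum (\<lambda>m. k (real m) y * real m powr (r - 1)) {1..} \<le> y powr (-s) * K"
    using bound y k_times_powr_eq_G by (simp_all add: G_integrable(2))
qed

lemma column_weight_sum:
  assumes x: "x > 0"
  shows "(\<lambda>n. k x (real n) * real n powr (s - 1)) summable_on {1..}"
    "infsum (\<lambda>n. k x (real n) * real n powr (s - 1)) {1..} \<le> x powr (-r) * K"
proof -
  note bound = scaled_decreasing_sum_bound[OF H_decreasing[folded H_def] less_imp_le[OF H_pos]
      H_integrable(1) x, of "x powr (-r-1)" "\<lambda>n. k x (real n) * real n powr (s - 1)"]
  have "x powr (-r-1) * x = x powr (-r)" using x by (simp add: powr_diff)
  then show "(\<lambda>n. k x (real n) * real n powr (s - 1)) summable_on {1..}"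
    "infsum (\<lambda>n. k x (real n) * real n powr (s - 1)) {1..} \<le> x powr (-r) * K"
    using bound x k_times_powr_eq_H by (simp_all add: H_integrable(2))
qed

subsection \<open>The two inequalities\<close>

definition inner_term :: "(nat \<Rightarrow> real) \<Rightarrow> nat \<Rightarrow> nat \<Rightarrow> real" where
  "inner_term a n m = real m powr (r - 1/q - 1) * real n powr (s - 1/p) * k (real m) (real n) * psum a m"

definition inner_sum :: "(nat \<Rightarrow> real) \<Rightarrow> nat \<Rightarrow> real" where
  "inner_sum a n = infsum (inner_term a n) {1..}"

definition double_term :: "(nat \<Rightarrow> real) \<Rightarrow> (nat \<Rightarrow> real) \<Rightarrow> nat \<Rightarrow> nat \<Rightarrow> real" where
  "double_term a b m n = real m powr (r - 1/q - 1) * real n powr (s - 1/p - 1)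
     * k (real m) (real n) * psum a m * psum b n"

definition majorant :: "(nat \<Rightarrow> real) \<Rightarrow> nat \<Rightarrow> nat \<Rightarrow> real" where
  "majorant a n m = real n powr (s - 1) * k (real m) (real n) * real m powr r * avg a m powr p"

lemma ineq1_iff:
  "ineq1 k p q r s C a b \<longleftrightarrow>
     (\<lambda>(m,n). double_term a b m n) summable_on {1..} \<times> {1..} \<and>
     infsum (\<lambda>(m,n). double_term a b m n) ({1..} \<times> {1..})
       < C * (infsum (\<lambda>n. a n powr p) {1..}) powr (1/p) * (infsum (\<lambda>n. b n powr q) {1..}) powr (1/q)"
  unfolding ineq1_def Let_def double_term_def by (simp add: case_prod_beta')

lemma ineq2_iff:
  "ineq2 k p q r s C a \<longleftrightarrow>
     (\<forall>n\<ge>1. inner_term a n summable_on {1..}) \<and>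
     (\<lambda>n. inner_sum a n powr p) summable_on {1..} \<and>
     infsum (\<lambda>n. inner_sum a n powr p) {1..} < C * infsum (\<lambda>n. a n powr p) {1..}"
  unfolding ineq2_def Let_def inner_sum_def inner_term_def[abs_def] by simp

lemma inner_term_nonneg: "admissible p a \<Longrightarrow> n \<ge> 1 \<Longrightarrow> m \<ge> 1 \<Longrightarrow> inner_term a n m \<ge> 0"
  unfolding inner_term_def using k_pos[of "real m" "real n"] psum_nonneg[of a m] admissible_nonneg
  by simp

lemma double_term_eq: "n \<ge> 1 \<Longrightarrow> double_term a b m n = inner_term a n m * avg b n"
  by (simp add: double_term_def inner_term_def avg_def powr_diff)

lemma majorant_nonneg: "n \<ge> 1 \<Longrightarrow> m \<ge> 1 \<Longrightarrow> majorant a n m \<ge> 0"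
  unfolding majorant_def using k_pos[of "real m" "real n"] by simp

lemma majorant_column_sum:
  assumes m: "m \<ge> 1"
  shows "(\<lambda>n. majorant a n m) summable_on {1..}" "infsum (\<lambda>n. majorant a n m) {1..} \<le> K * avg a m powr p"
proof -
  have pos: "real m > 0" using m by simp
  have eq: "(\<lambda>n. majorant a n m) = (\<lambda>n. (real m powr r * avg a m powr p) * (k (real m) (real n) * real n powr (s - 1)))"
    unfolding majorant_def by (auto simp: fun_eq_iff)
  show "(\<lambda>n. majorant a n m) summable_on {1..}"
    unfolding eq using column_weight_sum(1)[OF pos] by (rule summable_on_cmult_right)
  have "infsum (\<lambda>n. majorant a n m) {1..} = (real m powr r * avg a m powr p)
      * infsum (\<lambda>n. k (real m) (real n) * real n powr (s - 1)) {1..}"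
    unfolding eq by (rule infsum_cmult_right')
  also have "\<dots> \<le> (real m powr r * avg a m powr p) * (real m powr (-r) * K)"
    using column_weight_sum(2)[OF pos] by (intro mult_left_mono) auto
  also have "\<dots> = K * avg a m powr p" using pos by (simp add: powr_minus field_simps)
  finally show "infsum (\<lambda>n. majorant a n m) {1..} \<le> K * avg a m powr p" .
qed

lemma majorant_sums:
  assumes adm: "admissible p a"
  shows "\<And>n. n \<ge> 1 \<Longrightarrow> majorant a n summable_on {1..}"
    "(\<lambda>n. infsum (majorant a n) {1..}) summable_on {1..}"
    "infsum (\<lambda>n. infsum (majorant a n) {1..}) {1..} \<le> K * infsum (\<lambda>m. avg a m powr p) {1..}"
proof -
  have avg_summable: "(\<lambda>m. K * avg a m powr p) summable_on {1..}"
    using Hardy_inequality_strict(1)[OF p_gt_1 conjugate adm] by (rule summable_on_cmult_right)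
  have outer: "(\<lambda>m. infsum (\<lambda>n. majorant a n m) {1..}) summable_on {1..}"
    by (rule summable_on_comparison_test[OF avg_summable])
       (use majorant_column_sum(2) majorant_nonneg in \<open>auto intro: infsum_nonneg\<close>)
  note swap = nonneg_double_infsum_swap[of "{1..}" "{1..}" "\<lambda>m n. majorant a n m", OF _ _ outer]
  show "\<And>n. n \<ge> 1 \<Longrightarrow> majorant a n summable_on {1..}"
    "(\<lambda>n. infsum (majorant a n) {1..}) summable_on {1..}"
    using swap(3,4) majorant_nonneg majorant_column_sum(1) by auto
  have "infsum (\<lambda>n. infsum (majorant a n) {1..}) {1..} = infsum (\<lambda>m. infsum (\<lambda>n. majorant a n m) {1..}) {1..}"
    using swap(5) majorant_nonneg majorant_column_sum(1) by auto
  also have "\<dots> \<le> infsum (\<lambda>m. K * avg a m powr p) {1..}"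
    by (rule infsum_mono[OF outer avg_summable]) (use majorant_column_sum(2) in auto)
  also have "\<dots> = K * infsum (\<lambda>m. avg a m powr p) {1..}" by (rule infsum_cmult_right')
  finally show "infsum (\<lambda>n. infsum (majorant a n) {1..}) {1..} \<le> K * infsum (\<lambda>m. avg a m powr p) {1..}" .
qed
lemma inner_term_Hoelder_split:
  assumes adm: "admissible p a" and n: "n \<ge> 1" and m: "m \<ge> 1"
  shows "inner_term a n m = (real n powr (p * s - s) * majorant a n m) powr (1/p)
           * (k (real m) (real n) * real m powr (r - 1)) powr (1/q)"
proof -
  have pos: "real m > 0" "real n > 0" using m n by auto
  have "inner_term a n m = real m powr (r - 1/q - 1) * real n powr (s - 1/p) * k (real m) (real n)
      * (real m * avg a m)"
    unfolding inner_term_def real_mult_avg ..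
  also have "\<dots> = (real n powr (p * s - s) * majorant a n m) powr (1/p)
           * (k (real m) (real n) * real m powr (r - 1)) powr (1/q)"
    unfolding majorant_def
    by (rule Hoelder_split_factorization[OF pos k_pos[OF pos] avg_nonneg p_gt_1 conjugate])
       (rule admissible_nonneg[OF adm])
  finally show ?thesis .
qed

lemma inner_sum_nonneg: "admissible p a \<Longrightarrow> n \<ge> 1 \<Longrightarrow> inner_sum a n \<ge> 0"
  unfolding inner_sum_def using inner_term_nonneg by (intro infsum_nonneg) auto

lemma inner_sum_Hoelder_bound:
  assumes adm: "admissible p a" and n: "n \<ge> 1"
  shows "inner_term a n summable_on {1..}"
    "inner_sum a n \<le> (real n powr (p * s - s) * infsum (majorant a n) {1..}) powr (1/p)
       * infsum (\<lambda>m. k (real m) (real n) * real m powr (r - 1)) {1..} powr (1/q)"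
proof -
  define X where "X m = (real n powr (p * s - s) * majorant a n m) powr (1/p)" for m
  define Y where "Y m = (k (real m) (real n) * real m powr (r - 1)) powr (1/q)" for m
  have XY: "inner_term a n m = X m * Y m" if "m \<ge> 1" for m
    unfolding X_def Y_def using inner_term_Hoelder_split[OF adm n that] .
  have Xp: "X m powr p = real n powr (p * s - s) * majorant a n m" if "m \<ge> 1" for m
    unfolding X_def majorant_def using p_gt_1 k_pos[of "real m" "real n"] that n by (simp add: powr_powr)
  have Yq: "Y m powr q = k (real m) (real n) * real m powr (r - 1)" if "m \<ge> 1" for m
    unfolding Y_def using q_gt_1 k_pos[of "real m" "real n"] n that by (simp add: powr_powr)
  have X_summable: "(\<lambda>m. X m powr p) summable_on {1..}"
    by (rule summable_on_cong[THEN iffD1,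
          OF _ summable_on_cmult_right[OF majorant_sums(1)[OF adm n], of "real n powr (p * s - s)"]])
       (simp add: Xp)
  have Y_summable: "(\<lambda>m. Y m powr q) summable_on {1..}"
    using n by (intro summable_on_cong[THEN iffD1, OF _ row_weight_sum(1)]) (auto simp: Yq)
  have X_nonneg: "X m \<ge> 0" and Y_nonneg: "Y m \<ge> 0" for m unfolding X_def Y_def by simp_all
  note Hoelder = Hoelder_inequality_infsum[OF p_gt_1 conjugate X_nonneg Y_nonneg X_summable Y_summable]
  show "inner_term a n summable_on {1..}"
    using Hoelder(1) by (rule summable_on_cong[THEN iffD1, rotated]) (simp add: XY)
  have "infsum (\<lambda>m. X m powr p) {1..} = infsum (\<lambda>m. real n powr (p * s - s) * majorant a n m) {1..}"
    "infsum (\<lambda>m. Y m powr q) {1..} = infsum (\<lambda>m. k (real m) (real n) * real m powr (r - 1)) {1..}"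
    by (rule infsum_cong, simp add: Xp Yq)+
  moreover have "inner_sum a n = infsum (\<lambda>m. X m * Y m) {1..}"
    unfolding inner_sum_def by (rule infsum_cong) (simp add: XY)
  ultimately show "inner_sum a n \<le> (real n powr (p * s - s) * infsum (majorant a n) {1..}) powr (1/p)
       * infsum (\<lambda>m. k (real m) (real n) * real m powr (r - 1)) {1..} powr (1/q)"
    using Hoelder(2) by (simp add: infsum_cmult_right')
qed

lemma inner_sum_powr_le:
  assumes adm: "admissible p a" and n: "n \<ge> 1"
  shows "inner_sum a n powr p \<le> K powr (p - 1) * infsum (majorant a n) {1..}"
proof -
  define y where "y = real n"
  have y: "y > 0" using n unfolding y_def by simp
  define U where "U = infsum (majorant a n) {1..}"
  have U: "U \<ge> 0" unfolding U_def using majorant_nonneg n by (intro infsum_nonneg) auto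
  have "k (real m) y * real m powr (r - 1) \<ge> 0" if "m \<in> {1..}" for m
    using k_pos[of "real m" y] y that by simp
  then have "infsum (\<lambda>m. k (real m) y * real m powr (r - 1)) {1..} \<ge> 0" by (rule infsum_nonneg)
  then have "inner_sum a n powr p \<le> (y powr (p * s - s) * U) * (y powr (-s) * K) powr (p - 1)"
    using inner_sum_Hoelder_bound(2)[OF adm n] row_weight_sum[OF y] inner_sum_nonneg[OF adm n] U
    unfolding y_def U_def by (intro powr_le_of_Hoelder_bound[OF p_gt_1 conjugate]) (auto intro: infsum_nonneg)
  also have "\<dots> = K powr (p - 1) * U"
  proof -
    have "y powr (p * s - s) * y powr (-s * (p - 1)) = 1"
      using powr_add_eq[of "p * s - s" "-s * (p - 1)" 0 y] y by (simp add: algebra_simps)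
    moreover have "(y powr (-s) * K) powr (p - 1) = y powr (-s * (p - 1)) * K powr (p - 1)"
      using y kint_pos by (simp add: powr_mult powr_powr)
    ultimately show ?thesis by (metis (no_types, lifting) mult.assoc mult.commute mult_1)
  qed
  finally show ?thesis unfolding U_def .
qed

lemma inner_sum_powr_sum_le:
  assumes adm: "admissible p a"
  shows "(\<lambda>n. inner_sum a n powr p) summable_on {1..}"
    "infsum (\<lambda>n. inner_sum a n powr p) {1..} \<le> K powr p * infsum (\<lambda>m. avg a m powr p) {1..}"
proof -
  have majorant_summable: "(\<lambda>n. K powr (p - 1) * infsum (majorant a n) {1..}) summable_on {1..}"
    using majorant_sums(2)[OF adm] by (rule summable_on_cmult_right)
  show summable: "(\<lambda>n. inner_sum a n powr p) summable_on {1..}"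
    by (rule summable_on_comparison_test[OF majorant_summable]) (use inner_sum_powr_le[OF adm] inner_sum_nonneg[OF adm] in auto)
  have "infsum (\<lambda>n. inner_sum a n powr p) {1..}
      \<le> infsum (\<lambda>n. K powr (p - 1) * infsum (majorant a n) {1..}) {1..}"
    by (rule infsum_mono[OF summable majorant_summable]) (use inner_sum_powr_le[OF adm] in auto)
  also have "\<dots> = K powr (p - 1) * infsum (\<lambda>n. infsum (majorant a n) {1..}) {1..}"
    by (rule infsum_cmult_right')
  also have "\<dots> \<le> K powr (p - 1) * (K * infsum (\<lambda>m. avg a m powr p) {1..})"
    using majorant_sums(3)[OF adm] by (intro mult_left_mono) auto
  also have "\<dots> = K powr p * infsum (\<lambda>m. avg a m powr p) {1..}"
    using powr_mult_base[of K "p - 1"] kint_pos by (simp add: mult_ac)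
  finally show "infsum (\<lambda>n. inner_sum a n powr p) {1..} \<le> K powr p * infsum (\<lambda>m. avg a m powr p) {1..}" .
qed

theorem second_inequality:
  assumes adm: "admissible p a"
  shows "ineq2 k p q r s ((q * K) powr p) a"
  unfolding ineq2_iff
proof (intro conjI allI impI)
  show "inner_term a n summable_on {1..}" if "n \<ge> 1" for n
    using inner_sum_Hoelder_bound(1)[OF adm that] .
  show "(\<lambda>n. inner_sum a n powr p) summable_on {1..}"
    using inner_sum_powr_sum_le(1)[OF adm] .
  have "infsum (\<lambda>n. inner_sum a n powr p) {1..} \<le> K powr p * infsum (\<lambda>m. avg a m powr p) {1..}"
    by (rule inner_sum_powr_sum_le(2)[OF adm])
  also have "\<dots> < K powr p * (q powr p * infsum (\<lambda>n. a n powr p) {1..})"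
    using Hardy_inequality_strict(2)[OF p_gt_1 conjugate adm] kint_pos
    by (intro mult_strict_left_mono) auto
  also have "\<dots> = (q * K) powr p * infsum (\<lambda>n. a n powr p) {1..}"
    using kint_pos q_gt_1 by (simp add: powr_mult)
  finally show "infsum (\<lambda>n. inner_sum a n powr p) {1..} < (q * K) powr p * infsum (\<lambda>n. a n powr p) {1..}" .
qed

lemma double_sum_eq_inner_sums:
  assumes adma: "admissible p a" and admb: "admissible q b"
  shows "(\<lambda>(m,n). double_term a b m n) summable_on {1..} \<times> {1..}"
    "infsum (\<lambda>(m,n). double_term a b m n) ({1..} \<times> {1..}) = infsum (\<lambda>n. inner_sum a n * avg b n) {1..}"
    "(\<lambda>n. inner_sum a n * avg b n) summable_on {1..}"
proof -
  define f where "f n m = inner_term a n m * avg b n" for n m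
  have nonneg: "f n m \<ge> 0" if "n \<in> {1..}" "m \<in> {1..}" for n m
    unfolding f_def using inner_term_nonneg[OF adma] avg_nonneg[OF admissible_nonneg[OF admb]] that
    by simp
  have inner: "f n summable_on {1..}" if "n \<in> {1..}" for n
    unfolding f_def using inner_sum_Hoelder_bound(1)[OF adma] that by (intro summable_on_cmult_left) auto
  have inner_eq: "infsum (f n) {1..} = inner_sum a n * avg b n" for n
    unfolding f_def inner_sum_def by (rule infsum_cmult_left')
  show outer: "(\<lambda>n. inner_sum a n * avg b n) summable_on {1..}"
    using Hoelder_inequality_infsum(1)[OF p_gt_1 conjugate _ _ inner_sum_powr_sum_le(1)[OF adma]
        Hardy_inequality_strict(1)[OF q_gt_1 _ admb]]
      inner_sum_nonneg[OF adma] avg_nonneg[OF admissible_nonneg[OF admb]] conjugate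
    by (simp add: add.commute)
  note swap = nonneg_double_infsum_swap[of "{1..}" "{1..}" f, OF nonneg inner outer[folded inner_eq]]
  have term_eq: "(\<lambda>(m,n). double_term a b m n) x = (\<lambda>(m,n). f n m) x" if "x \<in> {1..} \<times> {1..}" for x
    using that double_term_eq by (auto simp: f_def)
  show "(\<lambda>(m,n). double_term a b m n) summable_on {1..} \<times> {1..}"
    using swap(1) by (rule summable_on_cong[THEN iffD1, rotated]) (use term_eq in auto)
  have "infsum (\<lambda>(m,n). double_term a b m n) ({1..} \<times> {1..}) = infsum (\<lambda>(m,n). f n m) ({1..} \<times> {1..})"
    by (rule infsum_cong) (use term_eq in auto)
  also have "\<dots> = infsum (\<lambda>n. inner_sum a n * avg b n) {1..}" using swap(2) unfolding inner_eq .
  finally show "infsum (\<lambda>(m,n). double_term a b m n) ({1..} \<times> {1..}) = infsum (\<lambda>n. inner_sum a n * avg b n) {1..}" .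
qed

lemma first_inequality_from_second:
  assumes adma: "admissible p a" and admb: "admissible q b" and C: "C > 0"
    and less: "infsum (\<lambda>n. inner_sum a n powr p) {1..} < C * infsum (\<lambda>n. a n powr p) {1..}"
  shows "ineq1 k p q r s (p * C powr (1/p)) a b"
proof -
  have pos_a: "infsum (\<lambda>n. a n powr p) {1..} > 0" using adma unfolding admissible_def by simp
  have pos_b: "infsum (\<lambda>n. b n powr q) {1..} > 0" using admb unfolding admissible_def by simp
  have qp: "1/q + 1/p = 1" using conjugate by simp
  have J0: "infsum (\<lambda>n. inner_sum a n powr p) {1..} \<ge> 0" by (intro infsum_nonneg) simp
  have B0: "infsum (\<lambda>n. avg b n powr q) {1..} \<ge> 0" by (intro infsum_nonneg) simp
  have "infsum (\<lambda>(m,n). double_term a b m n) ({1..} \<times> {1..}) = infsum (\<lambda>n. inner_sum a n * avg b n) {1..}"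
    by (rule double_sum_eq_inner_sums(2)[OF adma admb])
  also have "\<dots> \<le> (infsum (\<lambda>n. inner_sum a n powr p) {1..}) powr (1/p)
      * (infsum (\<lambda>n. avg b n powr q) {1..}) powr (1/q)"
    using Hoelder_inequality_infsum(2)[OF p_gt_1 conjugate _ _ inner_sum_powr_sum_le(1)[OF adma]
        Hardy_inequality_strict(1)[OF q_gt_1 qp admb]]
      inner_sum_nonneg[OF adma] avg_nonneg[OF admissible_nonneg[OF admb]] by simp
  also have "\<dots> < (C * infsum (\<lambda>n. a n powr p) {1..}) powr (1/p)
      * (p powr q * infsum (\<lambda>n. b n powr q) {1..}) powr (1/q)"
    using less J0 B0 p_gt_1 q_gt_1 C pos_a Hardy_inequality_strict(2)[OF q_gt_1 qp admb]
    by (intro mult_strict_mono powr_less_mono2) auto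
  also have "\<dots> = p * C powr (1/p) * (infsum (\<lambda>n. a n powr p) {1..}) powr (1/p)
      * (infsum (\<lambda>n. b n powr q) {1..}) powr (1/q)"
    using C pos_a pos_b p_gt_1 q_gt_1 by (simp add: powr_mult powr_powr)
  finally show ?thesis unfolding ineq1_iff using double_sum_eq_inner_sums(1)[OF adma admb] by simp
qed

theorem first_inequality:
  assumes adma: "admissible p a" and admb: "admissible q b"
  shows "ineq1 k p q r s (p * q * K) a b"
proof -
  have "infsum (\<lambda>n. inner_sum a n powr p) {1..} < (q * K) powr p * infsum (\<lambda>n. a n powr p) {1..}"
    using second_inequality[OF adma] unfolding ineq2_iff by simp
  then have "ineq1 k p q r s (p * ((q * K) powr p) powr (1/p)) a b"
    using q_gt_1 kint_pos by (intro first_inequality_from_second[OF adma admb]) simp_all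
  moreover have "p * ((q * K) powr p) powr (1/p) = p * q * K"
    using q_gt_1 kint_pos p_gt_1 by (simp add: powr_powr)
  ultimately show ?thesis by simp
qed

subsection \<open>Optimality of the constants\<close>

lemma integral_G_truncations_tendsto:
  "(\<lambda>j. integral {1/(real j+1)..real j+1} G) \<longlonglongrightarrow> K"
proof -
  define f where "f j u = (if u \<in> {1/(real j+1)..real j+1} then G u else 0)" for j :: nat and u :: real
  have sub: "{1/(real j+1)..real j+1} \<inter> {0<..} = {1/(real j+1)..real j+1}" for j :: nat
    by (auto intro: less_le_trans[of 0 "1/(real j + 1)"])
  have fint: "f j integrable_on {0<..}" for j
  proof -
    have "G integrable_on {1/(real j+1)..real j+1}"
      by (rule integrable_on_subinterval[OF G_integrable(1)]) (auto intro: less_le_trans[of 0 "1/(real j + 1)"])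
    then show ?thesis unfolding f_def using integrable_restrict_Int[of "{1/(real j+1)..real j+1}" G "{0<..}"] sub
      by simp
  qed
  have fval: "integral {0<..} (f j) = integral {1/(real j+1)..real j+1} G" for j
    unfolding f_def using integral_restrict_Int[of "{0<..}" "{1/(real j+1)..real j+1}" G] sub by simp
  have conv: "(\<lambda>j. f j u) \<longlonglongrightarrow> G u" if u: "u \<in> {0<..}" for u
  proof (rule tendsto_eventually)
    have up: "u > 0" using u by simp
    obtain j0 :: nat where j0: "real j0 \<ge> max u (1/u)" using real_arch_simple by blast
    show "\<forall>\<^sub>F j in sequentially. f j u = G u"
    proof (rule eventually_sequentiallyI[of j0])
      fix j assume "j0 \<le> j"
      then have j: "real j + 1 \<ge> u" "real j + 1 \<ge> 1/u" using j0 by auto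
      have "1/(real j + 1) \<le> u" using j(2) up by (simp add: field_simps)
      then show "f j u = G u" unfolding f_def using j(1) by auto
    qed
  qed
  have "(\<lambda>j. integral {0<..} (f j)) \<longlonglongrightarrow> integral {0<..} G"
    by (rule dominated_convergence(2)[OF fint G_integrable(1) _ conv])
       (auto simp: f_def abs_of_nonneg G_pos less_imp_le)
  then show ?thesis unfolding fval G_integrable(2) .
qed

lemma integral_G_approximation:
  assumes \<theta>: "\<theta> < 1"
  shows "\<exists>M::nat. M \<ge> 2 \<and> integral {1 / real M..real M} G \<ge> \<theta> * K"
proof -
  have "\<theta> * K < K" using \<theta> kint_pos by simp
  from order_tendstoD(1)[OF integral_G_truncations_tendsto this]
  obtain j0 where j0: "\<And>j. j \<ge> j0 \<Longrightarrow> \<theta> * K < integral {1/(real j+1)..real j+1} G"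
    unfolding eventually_sequentially by blast
  have "real (Suc (Suc j0)) = real (Suc j0) + 1" by simp
  then have "integral {1 / real (Suc (Suc j0))..real (Suc (Suc j0))} G > \<theta> * K" using j0[of "Suc j0"] by simp
  then show ?thesis by (intro exI[of _ "Suc (Suc j0)"]) auto
qed
lemma kernel_weight_eq_G:
  assumes "m \<ge> 1" "n \<ge> 1"
  shows "real m powr (r - 1/q - 1) * real n powr (s - 1/p - 1) * k (real m) (real n)
       * real m powr (1/q - e/p) * real n powr (1/p - e/q)
       = G (real m / real n) * real m powr (-e/p) * real n powr (-2 - e/q)"
proof -
  have pos: "real m > 0" "real n > 0" using assms by auto
  have m_pow: "real m powr (r - 1/q - 1) * real m powr (1/q - e/p) = real m powr (r - 1) * real m powr (-e/p)"
    using powr_add_eq[of "r - 1/q - 1" "1/q - e/p" "r - 1 - e/p" "real m"]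
      powr_add_eq[of "r - 1" "-e/p" "r - 1 - e/p" "real m"] by simp
  have n_pow: "real n powr (s - 1/p - 1) * real n powr (1/p - e/q) = real n powr (s - 1 - e/q)"
    "real n powr (-s-1) * real n powr (s - 1 - e/q) = real n powr (-2 - e/q)"
    by (rule powr_add_eq, simp)+
  have "real m powr (r - 1/q - 1) * real n powr (s - 1/p - 1) * k (real m) (real n)
       * real m powr (1/q - e/p) * real n powr (1/p - e/q)
      = (k (real m) (real n) * (real m powr (r - 1/q - 1) * real m powr (1/q - e/p)))
        * (real n powr (s - 1/p - 1) * real n powr (1/p - e/q))"
    by (simp only: mult_ac)
  also have "\<dots> = (real n powr (-s-1) * real n powr (s - 1 - e/q)) * G (real m / real n) * real m powr (-e/p)"
    unfolding m_pow n_pow(1) mult.assoc[symmetric] k_times_powr_eq_G[OF pos] by (simp only: mult_ac)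
  finally show ?thesis unfolding n_pow(2) by (simp only: mult_ac)
qed

lemma double_term_test_lower:
  fixes e \<theta> :: real and N M m n :: nat
  assumes e: "e > 0" "e \<le> p/(2*q)" "e \<le> q/(2*p)"
    and \<theta>: "0 \<le> \<theta>" "\<theta> \<le> 1 - real N powr (-1/(2*q))" "\<theta> \<le> 1 - real N powr (-1/(2*p))"
    and N: "N \<ge> 1" and m: "N \<le> m" "m \<le> n * M" and n: "N \<le> n"
  shows "double_term (test_seq p e) (test_seq q e) m n
       \<ge> p * q * \<theta>\<^sup>2 * real M powr (-e/p) * real n powr (-2-e) * G (real m / real n)"
proof -
  have qp: "1/q + 1/p = 1" using conjugate by simp
  have pos: "real m > 0" "real n > 0" "real M > 0" using m n N by (auto intro: Nat.gr0I)
  define w where "w = real m powr (r - 1/q - 1) * real n powr (s - 1/p - 1) * k (real m) (real n)"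
  have w: "w \<ge> 0" unfolding w_def using k_pos[OF pos(1,2)] by simp
  have A: "psum (test_seq p e) m \<ge> q * \<theta> * real m powr (1/q - e/p)"
    by (rule psum_test_seq_lower[OF p_gt_1 conjugate e(1,2) N \<theta>(1,2) m(1)])
  have B: "psum (test_seq q e) n \<ge> p * \<theta> * real n powr (1/p - e/q)"
    by (rule psum_test_seq_lower[OF q_gt_1 qp e(1,3) N \<theta>(1,3) n])
  have "double_term (test_seq p e) (test_seq q e) m n
      \<ge> w * (q * \<theta> * real m powr (1/q - e/p)) * (p * \<theta> * real n powr (1/p - e/q))"
    unfolding double_term_def w_def[symmetric]
    using A B w \<theta>(1) p_gt_1 q_gt_1 psum_nonneg[of "test_seq p e", OF test_seq_nonneg]
    by (intro mult_mono) auto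
  also have "w * (q * \<theta> * real m powr (1/q - e/p)) * (p * \<theta> * real n powr (1/p - e/q))
      = p * q * \<theta>\<^sup>2 * G (real m / real n) * real m powr (-e/p) * real n powr (-2 - e/q)"
    using kernel_weight_eq_G[of m n e] m n N unfolding w_def power2_eq_square
    by (simp add: mult_ac)
  also have "\<dots> \<ge> p * q * \<theta>\<^sup>2 * G (real m / real n) * (real n * real M) powr (-e/p) * real n powr (-2 - e/q)"
  proof -
    have "real m \<le> real n * real M" using m(2) by (metis of_nat_le_iff of_nat_mult)
    then have "real m powr (-e/p) \<ge> (real n * real M) powr (-e/p)"
      using pos e p_gt_1 by (intro powr_mono2') auto
    then show ?thesis using G_pos[of "real m / real n"] pos p_gt_1 q_gt_1 \<theta>(1)
      by (intro mult_left_mono mult_right_mono) auto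
  qed
  also have "p * q * \<theta>\<^sup>2 * G (real m / real n) * (real n * real M) powr (-e/p) * real n powr (-2 - e/q)
      = p * q * \<theta>\<^sup>2 * real M powr (-e/p) * real n powr (-2-e) * G (real m / real n)"
  proof -
    have "e/p + e/q = e" using conjugate by (metis distrib_left mult_1_right times_divide_eq_right)
    then have "real n powr (-e/p) * real n powr (-2 - e/q) = real n powr (-2-e)"
      by (intro powr_add_eq) simp
    then show ?thesis using pos by (simp add: powr_mult mult_ac)
  qed
  finally show ?thesis .
qed

lemma integral_G_le_Riemann_sum:
  fixes N M n :: nat
  assumes N: "N \<ge> 1" and M: "M \<ge> 2" and n: "n \<ge> N * M"
  shows "integral {1/real M..real M} G \<le> (\<Sum>m=N..n*M-1. G (real m / real n) / real n)"
proof -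
  have "N * (2 * 2) \<le> N * (M * M)" using mult_le_mono[OF M M] by (rule mult_le_mono2)
  then have NM: "N * 4 \<le> N * M * M" by (simp add: mult.assoc)
  have "N * M * M \<le> n * M" using n by (rule mult_right_mono) simp
  then have upper: "N \<le> n * M - 1" "n * M - 1 + 1 = n * M" using N NM by linarith+
  have M_pos: "real M > 0" using M by simp
  have "N * 1 \<le> N * M" using M by (intro mult_le_mono2) simp
  then have "N \<le> n" using n by (metis mult.right_neutral le_trans)
  then have y: "real n > 0" using N by simp
  have lower_end: "real N / real n > 0" using N y by simp
  have "integral {1/real M..real M} G \<le> integral {real N / real n..real (n*M-1+1) / real n} G"
  proof (rule integral_subset_le)
    have "real N * real M \<le> real n" using n by (metis of_nat_le_iff of_nat_mult)
    then have "real N / real n \<le> 1 / real M" using y M_pos by (simp add: field_simps)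
    moreover have "real (n*M-1+1) / real n = real M" unfolding upper(2) using y by simp
    ultimately show "{1/real M..real M} \<subseteq> {real N / real n..real (n*M-1+1) / real n}" by auto
    show "G integrable_on {1/real M..real M}"
      by (rule integrable_on_subinterval[OF G_integrable(1)]) (use M_pos in \<open>auto intro: less_le_trans[of 0 "1/real M"]\<close>)
    show "G integrable_on {real N / real n..real (n*M-1+1) / real n}"
      using lower_end by (intro integrable_on_subinterval[OF G_integrable(1)]) auto
    show "\<forall>x\<in>{real N / real n..real (n*M-1+1) / real n}. 0 \<le> G x"
      using lower_end G_pos by (auto intro: less_imp_le)
  qed
  also have "\<dots> \<le> (\<Sum>m=N..n*M-1. G (real m / real n) / real n)"
    by (rule integral_le_decreasing_sum[OF G_decreasing[folded G_def] G_integrable(1) y N upper(1)])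
  finally show ?thesis .
qed

lemma test_row_sum_lower:
  fixes e \<theta> :: real and N M n :: nat
  assumes e: "e > 0" "e \<le> p/(2*q)" "e \<le> q/(2*p)"
    and \<theta>: "0 \<le> \<theta>" "\<theta> \<le> 1 - real N powr (-1/(2*q))" "\<theta> \<le> 1 - real N powr (-1/(2*p))"
    and N: "N \<ge> 1" and M: "M \<ge> 2" and GM: "integral {1/real M..real M} G \<ge> \<theta> * K"
    and n: "n \<ge> N * M"
  shows "(\<Sum>m=N..n*M-1. double_term (test_seq p e) (test_seq q e) m n)
       \<ge> p * q * \<theta>^3 * K * real M powr (-e/p) * real n powr (-e-1)"
proof -
  have "N * 1 \<le> N * M" using M by (intro mult_le_mono2) simp
  then have nN: "N \<le> n" using n by (metis mult.right_neutral le_trans)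
  define y where "y = real n"
  have y: "y > 0" using nN N unfolding y_def by simp
  define c where "c = p * q * \<theta>\<^sup>2 * real M powr (-e/p) * y powr (-2-e)"
  have c: "c \<ge> 0" unfolding c_def using \<theta> p_gt_1 q_gt_1 by simp
  have "c * y * (\<theta> * K) \<le> c * y * (\<Sum>m=N..n*M-1. G (real m / y) / y)"
    using GM integral_G_le_Riemann_sum[OF N M n] c y unfolding y_def by (intro mult_left_mono) auto
  also have "\<dots> = (\<Sum>m=N..n*M-1. c * G (real m / y))"
    using y by (simp add: sum_distrib_left sum_divide_distrib)
  also have "\<dots> \<le> (\<Sum>m=N..n*M-1. double_term (test_seq p e) (test_seq q e) m n)"
    unfolding c_def y_def using M
    by (intro sum_mono double_term_test_lower[OF e \<theta> N _ _ nN]) auto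
  also have "c * y * (\<theta> * K) = p * q * \<theta>^3 * K * real M powr (-e/p) * y powr (-e-1)"
  proof -
    have "y powr (-2-e) * y = y powr (-e-1)" using powr_add_eq[of "-2-e" 1 "-e-1" y] y by simp
    then show ?thesis unfolding c_def by (simp add: power3_eq_cube power2_eq_square mult_ac)
  qed
  finally show ?thesis unfolding y_def .
qed

lemma test_inner_product_lower:
  fixes e \<theta> :: real and N M n :: nat
  assumes e: "e > 0" "e \<le> p/(2*q)" "e \<le> q/(2*p)"
    and \<theta>: "0 \<le> \<theta>" "\<theta> \<le> 1 - real N powr (-1/(2*q))" "\<theta> \<le> 1 - real N powr (-1/(2*p))"
    and N: "N \<ge> 1" and M: "M \<ge> 2" and GM: "integral {1/real M..real M} G \<ge> \<theta> * K"
    and n: "n \<ge> N * M"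
  shows "inner_sum (test_seq p e) n * avg (test_seq q e) n
       \<ge> p * q * \<theta>^3 * K * real M powr (-e/p) * real n powr (-e-1)"
proof -
  define a where "a = test_seq p e"
  define b where "b = test_seq q e"
  have adma: "admissible p a" and admb: "admissible q b"
    unfolding a_def b_def using admissible_test_seq p_gt_1 q_gt_1 e(1) by auto
  have "N * 1 \<le> N * M" using M by (intro mult_le_mono2) simp
  then have n1: "n \<ge> 1" using n N by linarith
  have row_summable: "(\<lambda>m. double_term a b m n) summable_on {1..}"
    unfolding double_term_eq[OF n1]
    using inner_sum_Hoelder_bound(1)[OF adma n1] by (rule summable_on_cmult_left)
  have "p * q * \<theta>^3 * K * real M powr (-e/p) * real n powr (-e-1) \<le> (\<Sum>m=N..n*M-1. double_term a b m n)"
    unfolding a_def b_def by (rule test_row_sum_lower[OF e \<theta> N M GM n])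
  also have "\<dots> \<le> infsum (\<lambda>m. double_term a b m n) {1..}"
    by (rule finite_sum_le_infsum[OF row_summable])
       (use N inner_term_nonneg[OF adma n1] avg_nonneg[OF admissible_nonneg[OF admb]]
        in \<open>auto simp: double_term_eq[OF n1]\<close>)
  also have "\<dots> = inner_sum a n * avg b n"
    unfolding double_term_eq[OF n1] inner_sum_def by (rule infsum_cmult_left')
  finally show ?thesis unfolding a_def b_def .
qed

lemma test_double_sum_lower:
  fixes e \<theta> :: real and N M :: nat
  assumes e: "e > 0" "e \<le> p/(2*q)" "e \<le> q/(2*p)"
    and \<theta>: "0 \<le> \<theta>" "\<theta> \<le> 1 - real N powr (-1/(2*q))" "\<theta> \<le> 1 - real N powr (-1/(2*p))"
    and N: "N \<ge> 1" and M: "M \<ge> 2" and GM: "integral {1/real M..real M} G \<ge> \<theta> * K"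
  shows "infsum (\<lambda>(m,n). double_term (test_seq p e) (test_seq q e) m n) ({1..} \<times> {1..})
       \<ge> p * q * \<theta>^3 * K * real M powr (-e/p) * real (N * M) powr (-e) / e"
proof -
  have adma: "admissible p (test_seq p e)" and admb: "admissible q (test_seq q e)"
    using admissible_test_seq p_gt_1 q_gt_1 e(1) by auto
  have "p * q * \<theta>^3 * K * real M powr (-e/p) * real (N * M) powr (-e) / e
      \<le> infsum (\<lambda>n. inner_sum (test_seq p e) n * avg (test_seq q e) n) {1..}"
  proof (rule infsum_ge_if_tail_ge_zeta[OF double_sum_eq_inner_sums(3)[OF adma admb] _ e(1)])
    show "inner_sum (test_seq p e) n * avg (test_seq q e) n \<ge> 0" if "n \<ge> 1" for n
      using inner_sum_nonneg[OF adma that] avg_nonneg[OF admissible_nonneg[OF admb]] by simp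
    show "p * q * \<theta>^3 * K * real M powr (-e/p) \<ge> 0" using p_gt_1 q_gt_1 \<theta>(1) kint_pos by simp
    show "N * M \<ge> 1" using N M by simp
  qed (rule test_inner_product_lower[OF e \<theta> N M GM])
  then show ?thesis using double_sum_eq_inner_sums(2)[OF adma admb] by simp
qed

lemma test_double_sum_large:
  assumes \<theta>: "0 < \<theta>" "\<theta> < 1"
  obtains e where "e > 0" "1 + e < 1/\<theta>"
    "p * q * \<theta>^4 * K / e \<le> infsum (\<lambda>(m,n). double_term (test_seq p e) (test_seq q e) m n) ({1..} \<times> {1..})"
proof -
  obtain M where M: "M \<ge> 2" "integral {1/real M..real M} G \<ge> \<theta> * K"
    using integral_G_approximation[OF \<theta>(2)] by blast
  have "eventually (\<lambda>N::nat. \<theta> \<le> 1 - real N powr (-1/(2*q))) sequentially"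
    "eventually (\<lambda>N::nat. \<theta> \<le> 1 - real N powr (-1/(2*p))) sequentially"
    using eventually_le_one_minus_neg_powr \<theta> p_gt_1 q_gt_1 by simp_all
  moreover have "eventually (\<lambda>N::nat. N \<ge> 1) sequentially" by (rule eventually_ge_at_top)
  ultimately have "eventually (\<lambda>N::nat. N \<ge> 1 \<and> \<theta> \<le> 1 - real N powr (-1/(2*q))
      \<and> \<theta> \<le> 1 - real N powr (-1/(2*p))) sequentially"
    by eventually_elim auto
  then obtain N :: nat where N: "N \<ge> 1" "\<theta> \<le> 1 - real N powr (-1/(2*q))" "\<theta> \<le> 1 - real N powr (-1/(2*p))"
    unfolding eventually_sequentially by auto
  obtain e where e: "e > 0" "\<theta> < real M powr (-e/p) * real (N * M) powr (-e)" "1 + e < 1/\<theta>"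
      "e \<le> min (p/(2*q)) (q/(2*p))"
    using small_exponent_exists[OF \<theta>, of "real M" "real (N * M)" p "min (p/(2*q)) (q/(2*p))"]
      M N p_gt_1 q_gt_1 by auto
  have "p * q * \<theta>^3 * K * \<theta> \<le> p * q * \<theta>^3 * K * (real M powr (-e/p) * real (N * M) powr (-e))"
    using e(2) p_gt_1 q_gt_1 kint_pos \<theta>(1) by (intro mult_left_mono) auto
  then have "p * q * \<theta>^4 * K / e \<le> p * q * \<theta>^3 * K * (real M powr (-e/p) * real (N * M) powr (-e)) / e"
    using e(1) by (intro divide_right_mono) (simp_all add: power_Suc[of \<theta> 3, simplified] mult_ac)
  also have "\<dots> \<le> infsum (\<lambda>(m,n). double_term (test_seq p e) (test_seq q e) m n) ({1..} \<times> {1..})"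
    using test_double_sum_lower[OF e(1) _ _ less_imp_le[OF \<theta>(1)] N(2,3) N(1) M] e(4)
    by (simp add: mult_ac)
  finally show ?thesis using that e(1,3) by blast
qed

theorem first_constant_best:
  assumes C: "0 < C" "C < p * q * K"
  shows "\<exists>a b. admissible p a \<and> admissible q b \<and> \<not> ineq1 k p q r s C a b"
proof -
  have pqK: "p * q * K > 0" using p_gt_1 q_gt_1 kint_pos by simp
  define \<rho> where "\<rho> = C / (p * q * K)"
  have \<rho>: "0 < \<rho>" "\<rho> < 1" unfolding \<rho>_def using C pqK by (simp_all add: divide_less_eq)
  define x where "x = (1 + \<rho>) / 2"
  have x: "0 < x" "x < 1" "\<rho> < x" unfolding x_def using \<rho> by auto
  have "C = \<rho> * (p * q * K)" unfolding \<rho>_def using p_gt_1 q_gt_1 kint_pos by simp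
  also have "\<dots> < x * (p * q * K)" using x(3) pqK by (rule mult_strict_right_mono)
  finally have C_less: "C < x * (p * q * K)" .
  define \<theta> where "\<theta> = x powr (1/5)"
  have \<theta>5: "\<theta> ^ 5 = x" unfolding \<theta>_def using x by (simp add: powr_powr flip: powr_realpow)
  have \<theta>: "0 < \<theta>" "\<theta> < 1" unfolding \<theta>_def using x powr_less_mono2[of "1/5" x 1] by auto
  obtain e where e: "e > 0" "1 + e < 1/\<theta>"
    and large: "p * q * \<theta>^4 * K / e \<le> infsum (\<lambda>(m,n). double_term (test_seq p e) (test_seq q e) m n) ({1..} \<times> {1..})"
    using test_double_sum_large[OF \<theta>] by blast
  define Z where "Z = infsum (\<lambda>n. real n powr (-e-1)) {1..}"
  have Z: "1 \<le> Z" "Z \<le> 1 + 1/e" unfolding Z_def using zeta_bounds[OF e(1)] by auto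
  have "C * Z \<le> C * (1 + 1/e)" using Z C by (intro mult_left_mono) auto
  also have "\<dots> = C * (1 + e) / e" using e(1) by (simp add: field_simps)
  also have "\<dots> < (C / \<theta>) / e"
    using mult_strict_left_mono[OF e(2) C(1)] e(1) by (intro divide_strict_right_mono) simp_all
  also have "\<dots> < p * q * \<theta>^4 * K / e"
  proof (rule divide_strict_right_mono[OF _ e(1)])
    have "C < \<theta> * (p * q * \<theta>^4 * K)"
      using C_less unfolding \<theta>5[symmetric] power_Suc[of \<theta> 4, simplified] by (simp add: mult_ac)
    then show "C / \<theta> < p * q * \<theta>^4 * K" using \<theta>(1) by (simp add: divide_less_eq mult.commute)
  qed
  finally have less: "C * Z < infsum (\<lambda>(m,n). double_term (test_seq p e) (test_seq q e) m n) ({1..} \<times> {1..})"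
    using large by linarith
  have "infsum (\<lambda>n. test_seq p e n powr p) {1..} = Z" "infsum (\<lambda>n. test_seq q e n powr q) {1..} = Z"
    using p_gt_1 q_gt_1 by (simp_all add: test_seq_powr Z_def)
  moreover have "Z powr (1/p) * Z powr (1/q) = Z"
    using Z(1) conjugate by (simp add: powr_add[symmetric])
  ultimately have "\<not> ineq1 k p q r s C (test_seq p e) (test_seq q e)"
    unfolding ineq1_iff using less by (simp add: mult.assoc)
  moreover have "admissible p (test_seq p e)" "admissible q (test_seq q e)"
    using admissible_test_seq p_gt_1 q_gt_1 e(1) by simp_all
  ultimately show ?thesis by blast
qed

theorem second_constant_best:
  assumes C: "0 < C" "C < (q * K) powr p"
  shows "\<exists>a. admissible p a \<and> \<not> ineq2 k p q r s C a"
proof -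
  have "C powr (1/p) < ((q * K) powr p) powr (1/p)" using C p_gt_1 by (intro powr_less_mono2) auto
  also have "\<dots> = q * K" using q_gt_1 kint_pos p_gt_1 by (simp add: powr_powr)
  finally have "p * C powr (1/p) < p * q * K" using p_gt_1 by simp
  moreover have "0 < p * C powr (1/p)" using C p_gt_1 by simp
  ultimately obtain a b where ab: "admissible p a" "admissible q b" "\<not> ineq1 k p q r s (p * C powr (1/p)) a b"
    using first_constant_best by blast
  have "\<not> ineq2 k p q r s C a"
    using first_inequality_from_second[OF ab(1,2) C(1)] ab(3) unfolding ineq2_iff by blast
  then show ?thesis using ab(1) by blast
qed

end

theorem theorem4p1:
  fixes p q lam r s :: real and k :: "real \<Rightarrow> real \<Rightarrow> real"
  assumes hp: "p > 1" and hpq: "1/p + 1/q = 1"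
    and hlam: "lam > 0" and hrs: "r + s = lam"
    and kmeas: "set_borel_measurable lebesgue ({0<..} \<times> {0<..}) (\<lambda>z. k (fst z) (snd z))"
    and kpos: "\<And>x y. x > 0 \<Longrightarrow> y > 0 \<Longrightarrow> k x y > 0"
    and khom: "\<And>u x y. u > 0 \<Longrightarrow> x > 0 \<Longrightarrow> y > 0 \<Longrightarrow> k (u * x) (u * y) = u powr (- lam) * k x y"
    and kint_fin: "set_integrable lborel {0<..} (\<lambda>u. k u 1 * u powr (r - 1))"
    and kint_pos: "kint k r > 0"
    and mono1: "decr_strict_somewhere (\<lambda>u. k u 1 * u powr (r - 1))"
    and mono2: "decr_strict_somewhere (\<lambda>u. k 1 u * u powr (s - 1))"
  shows "(\<forall>a b. admissible p a \<and> admissible q b \<longrightarrow> ineq1 k p q r s (p * q * kint k r) a b)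
       \<and> (\<forall>a. admissible p a \<longrightarrow> ineq2 k p q r s ((q * kint k r) powr p) a)
       \<and> (\<forall>C. 0 < C \<and> C < p * q * kint k r \<longrightarrow>
             (\<exists>a b. admissible p a \<and> admissible q b \<and> \<not> ineq1 k p q r s C a b))
       \<and> (\<forall>C. 0 < C \<and> C < (q * kint k r) powr p \<longrightarrow>
             (\<exists>a. admissible p a \<and> \<not> ineq2 k p q r s C a))"
proof -
  interpret homogeneous_kernel p q lam r s k
    using hp hpq hrs kpos khom kint_fin kint_pos mono1 mono2
    by unfold_locales (auto simp: decr_strict_somewhere_def)
  show ?thesis
    using first_inequality second_inequality first_constant_best second_constant_best by blast
qed

end
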